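(* Let $u$ generate a cyclic group of order $q$ (a power of 2) and let $0<\ell,k\le q/2$ be odd integers. Then there is a decomposition $V(2\ell)\otimes V(2k)=W\perp W'$ into $K[u]$-submodules $W,W'$ that are orthogonal with respect to the tensor product form, such that $W\cong\operatorname{Ind}_{\langle u^2\rangle}^{\langle u\rangle}(V_\ell\otimes V_k)\cong W'$ as $K[u]$-modules.
   Context: $K$ is algebraically closed of characteristic 2; $V_d$ is the $d$-dimensional indecomposable module for a cyclic 2-group (one unipotent Jordan block). For $d=2m$ even, $V(d)$ is $V_d$ with basis $e_1,\dots,e_d$, $ue_1=e_1$, $ue_i=e_i+\cdots+e_1$ ($2\le i\le m+1$), $ue_i=e_i+e_{i-1}$ ($m+1<i\le d$), form $b(e_i,e_j)=1$ iff $i+j=d+1$. The tensor product of bilinear modules $(V,b)\otimes(V',b')$ carries the form $(v_1\otimes v_1',v_2\otimes v_2')\mapsto b(v_1,v_2)b'(v_1',v_2')$. $\operatorname{Ind}_H^G(M)=K[G]\otimes_{K[H]}M$. *)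

theory Defs
  imports "Jordan_Normal_Form.Matrix" "HOL-Computational_Algebra.Polynomial"
begin

definition alg_closed :: "'a::field itself \<Rightarrow> bool" where
  "alg_closed _ \<longleftrightarrow> (\<forall>p::'a poly. degree p \<ge> 1 \<longrightarrow> (\<exists>x. poly p x = 0))"

(* Matrix of u on V(d), d = 2m, w.r.t. e_1..e_d (stored 0-based: e_{i+1} ~ index i).
   Column c is u e_{c+1}. *)
definition Vu :: "nat \<Rightarrow> 'a::field mat" where
  "Vu d = mat d d (\<lambda>(r,c). let m = d div 2; i = r + 1; j = c + 1 in
      if j = 1 then (if i = 1 then 1 else 0)
      else if j \<le> m + 1 then (if i \<le> j then 1 else 0)
      else (if i = j \<or> i + 1 = j then 1 else 0))"

definition Vform :: "nat \<Rightarrow> 'a::field mat" where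
  "Vform d = mat d d (\<lambda>(r,c). if (r + 1) + (c + 1) = d + 1 then 1 else 0)"

definition Jblock :: "nat \<Rightarrow> 'a::field mat" where
  "Jblock n = mat n n (\<lambda>(r,c). if r = c \<or> r + 1 = c then 1 else 0)"

(* Kronecker product; basis e_i (x) f_j stored at index i * dim B + j. *)
definition kron :: "'a::field mat \<Rightarrow> 'a mat \<Rightarrow> 'a mat" where
  "kron A B = mat (dim_row A * dim_row B) (dim_col A * dim_col B)
     (\<lambda>(i,j). A $$ (i div dim_row B, j div dim_col B) * B $$ (i mod dim_row B, j mod dim_col B))"

definition bil :: "'a::field mat \<Rightarrow> 'a vec \<Rightarrow> 'a vec \<Rightarrow> 'a" where
  "bil G x y = x \<bullet> (G *\<^sub>v y)"

(* Induction from the index-2 subgroup <u^2> to <u>: if u^2 acts on M (dim n) by A,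
   then Ind = 1(x)M (+) u(x)M and u acts by the block matrix [[0, A], [I, 0]]. *)
definition Ind2 :: "'a::field mat \<Rightarrow> 'a mat" where
  "Ind2 A = four_block_mat (0\<^sub>m (dim_row A) (dim_row A)) A (1\<^sub>m (dim_row A)) (0\<^sub>m (dim_row A) (dim_row A))"

definition subspace_of :: "nat \<Rightarrow> 'a::field vec set \<Rightarrow> bool" where
  "subspace_of n W \<longleftrightarrow> W \<subseteq> carrier_vec n \<and> 0\<^sub>v n \<in> W \<and>
     (\<forall>x\<in>W. \<forall>y\<in>W. x + y \<in> W) \<and> (\<forall>c. \<forall>x\<in>W. c \<cdot>\<^sub>v x \<in> W)"

definition submodule_of :: "'a::field mat \<Rightarrow> 'a vec set \<Rightarrow> bool" where
  "submodule_of U W \<longleftrightarrow> subspace_of (dim_row U) W \<and> (\<forall>w\<in>W. U *\<^sub>v w \<in> W)"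

definition module_iso :: "'a::field mat \<Rightarrow> 'a vec set \<Rightarrow> 'a mat \<Rightarrow> bool" where
  "module_iso U W T \<longleftrightarrow> (\<exists>f. bij_betw f W (carrier_vec (dim_row T)) \<and>
     (\<forall>x\<in>W. \<forall>y\<in>W. f (x + y) = f x + f y) \<and>
     (\<forall>c. \<forall>x\<in>W. f (c \<cdot>\<^sub>v x) = c \<cdot>\<^sub>v f x) \<and>
     (\<forall>x\<in>W. f (U *\<^sub>v x) = T *\<^sub>v f x))"

end

theory Submission
  imports Defs "Jordan_Normal_Form.Determinant"
begin

(*
  For odd m and char K = 2, put x_c = (u - 1)^(2(m-1-c)) e_(2m) for c < m. Then u^2 x_c = x_c + x_(c-1),
  so x_0, ..., x_(m-1), u x_0, ..., u x_(m-1) is a basis of V(2m) in which u acts as on Ind(V_m), the x_c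
  spanning 1 (x) V_m. Both halves of this basis are totally isotropic: the x_c lie in span {e_2, e_4, ...}
  and the u x_c in span {e_1 + e_2, e_3 + e_4, ...}; m odd is what makes u map the second span back into
  the first.

  Tensoring two such bases identifies V(2l) (x) V(2k) with Ind(V_l) (x) Ind(V_k). The basis tensors whose
  two factors come from the same half (1 (x) 1 and u (x) u) span a copy W of Ind(V_l (x) V_k); applying u
  to the second factor, which commutes with the diagonal action, moves W onto the span W' of the remaining
  basis tensors. The Gram matrix of the tensor form is the tensor product of two matrices vanishing on
  their diagonal blocks, hence vanishes between W and W'.
*)

section \<open>Matrices, intertwiners and orthogonal decompositions\<close>

lemma sum_lessThan_pairs: "(\<Sum>c<2*(m::nat). f c) = (\<Sum>s<m. f (2*s) + f (2*s+1))"
  by (induction m) (auto simp: numeral_2_eq_2 add.assoc)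

lemma sum_lessThan_mult: "(\<Sum>t<(a::nat)*b. f t) = (\<Sum>i<a. \<Sum>j<b. f (i*b+j))"
proof (induction a)
  case (Suc a)
  have "{..<Suc a * b} = {..<a*b} \<union> (\<lambda>j. a*b+j) ` {..<b}"
  proof (rule equalityI)
    show "{..<Suc a * b} \<subseteq> {..<a*b} \<union> (\<lambda>j. a*b+j) ` {..<b}"
    proof
      fix x assume "x \<in> {..<Suc a*b}"
      then show "x \<in> {..<a*b} \<union> (\<lambda>j. a*b+j) ` {..<b}"
        by (cases "x < a*b") (auto simp: image_iff intro!: bexI[of _ "x - a*b"])
    qed
  qed auto
  moreover have "{..<a*b} \<inter> (\<lambda>j. a*b+j) ` {..<b} = {}" by auto
  ultimately have "(\<Sum>t<Suc a*b. f t) = (\<Sum>t<a*b. f t) + (\<Sum>j<b. f (a*b+j))"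
    by (simp add: sum.union_disjoint sum.reindex inj_on_def)
  then show ?case using Suc by simp
qed simp

lemma sum_lessThan_double: "(\<Sum>c<2*m. f c) = (\<Sum>c<m. f c) + (\<Sum>c<(m::nat). f (m+c))"
  using sum_lessThan_mult[of f 2 m] by (simp add: numeral_2_eq_2 sum.distrib)

lemma mult_add_less_mult: "(a::nat) < l \<Longrightarrow> b < k \<Longrightarrow> a*k + b < l*k"
proof -
  assume "a < l" "b < k"
  then have "a*k + b < (a+1)*k" by simp
  also have "\<dots> \<le> l*k" using \<open>a < l\<close> by (intro mult_right_mono) auto
  finally show ?thesis .
qed

lemma mult_add_div_mod: "(y::nat) < b \<Longrightarrow> (x*b + y) div b = x \<and> (x*b + y) mod b = y"
  by simp

lemma char_two_add_self: "(2::'a::field) = 0 \<Longrightarrow> (x::'a) + x = 0"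
  by (metis mult_2 mult_zero_left)

lemma mult_mat_vec_index_sum:
  "A \<in> carrier_mat n m \<Longrightarrow> v \<in> carrier_vec m \<Longrightarrow> r < n \<Longrightarrow> (A *\<^sub>v v) $ r = (\<Sum>c<m. A $$ (r,c) * v $ c)"
  by (simp add: scalar_prod_def atLeast0LessThan)

lemma mult_mat_index_sum:
  "A \<in> carrier_mat n k \<Longrightarrow> B \<in> carrier_mat k p \<Longrightarrow> i < n \<Longrightarrow> j < p \<Longrightarrow>
   (A * B) $$ (i,j) = (\<Sum>t<k. A $$ (i,t) * B $$ (t,j))"
  by (simp add: scalar_prod_def atLeast0LessThan)

lemma scalar_prod_sum: "w \<in> carrier_vec n \<Longrightarrow> v \<bullet> w = (\<Sum>r<n. v $ r * w $ r)"
  by (simp add: scalar_prod_def atLeast0LessThan)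

lemma mult_mat_vec_index_zero:
  assumes A: "A \<in> carrier_mat n m" and v: "v \<in> carrier_vec m" and r: "r < n"
    and zero: "\<And>c. c < m \<Longrightarrow> A $$ (r,c) = 0 \<or> v $ c = 0"
  shows "(A *\<^sub>v v) $ r = (0::'a::field)"
  unfolding mult_mat_vec_index_sum[OF A v r] using zero by (intro sum.neutral) auto

lemma scalar_prod_zero:
  assumes w: "w \<in> carrier_vec n" and zero: "\<And>i. i < n \<Longrightarrow> v $ i = 0 \<or> w $ i = 0"
  shows "v \<bullet> w = (0::'a::field)"
  unfolding scalar_prod_sum[OF w] using zero by (intro sum.neutral) auto

lemma mult_mat_vec_zero: "A \<in> carrier_mat nr n \<Longrightarrow> A *\<^sub>v 0\<^sub>v n = (0\<^sub>v nr :: 'a::field vec)"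
  by (intro eq_vecI) (auto simp: scalar_prod_def)

lemma injective_mat_invertible:
  fixes A :: "'a::field mat"
  assumes A: "A \<in> carrier_mat n n"
    and inj: "\<And>v. v \<in> carrier_vec n \<Longrightarrow> A *\<^sub>v v = 0\<^sub>v n \<Longrightarrow> v = 0\<^sub>v n"
  shows "\<exists>B \<in> carrier_mat n n. A * B = 1\<^sub>m n \<and> B * A = 1\<^sub>m n"
proof -
  have "det A \<noteq> 0" using det_0_iff_vec_prod_zero_field[OF A] inj by blast
  from det_non_zero_imp_unit[OF A this, of "()"] show ?thesis
    unfolding Units_def ring_mat_def by auto
qed

lemma unitriangular_mat_injective:
  fixes A :: "'a::field mat"
  assumes A: "A \<in> carrier_mat n n" and ut: "upper_triangular A"
    and diag: "\<And>i. i < n \<Longrightarrow> A $$ (i,i) = 1"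
    and v: "v \<in> carrier_vec n" and z: "A *\<^sub>v v = 0\<^sub>v n"
  shows "v = 0\<^sub>v n"
proof -
  have "0 \<notin> set (diag_mat A)" using A diag unfolding diag_mat_def by auto
  then have "det A \<noteq> 0" using upper_triangular_imp_det_eq_0_iff[OF A ut] by blast
  then show ?thesis using det_0_iff_vec_prod_zero_field[OF A] v z by blast
qed

lemma left_inverse_cancel:
  assumes "Ai \<in> carrier_mat n N" "A \<in> carrier_mat N n" "Ai * A = 1\<^sub>m n" "x \<in> carrier_vec n"
  shows "Ai *\<^sub>v (A *\<^sub>v x) = (x :: 'a::field vec)"
proof -
  have "Ai *\<^sub>v (A *\<^sub>v x) = (Ai * A) *\<^sub>v x" by (rule assoc_mult_mat_vec[OF assms(1,2,4), symmetric])
  then show ?thesis using assms(3,4) by simp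
qed

lemma left_invertible_injective:
  assumes "Ai \<in> carrier_mat n N" "A \<in> carrier_mat N n" "Ai * A = 1\<^sub>m n"
    and "x \<in> carrier_vec n" "A *\<^sub>v x = 0\<^sub>v N"
  shows "x = (0\<^sub>v n :: 'a::field vec)"
  using left_inverse_cancel[OF assms(1-4)] assms(5) mult_mat_vec_zero[OF assms(1)] by simp

lemma intertwiner_mult:
  fixes U T B G C :: "'a::field mat"
  assumes "U \<in> carrier_mat N N" "T \<in> carrier_mat N M" "B \<in> carrier_mat M M"
    "G \<in> carrier_mat M n" "C \<in> carrier_mat n n"
    and "U * T = T * B" "B * G = G * C"
  shows "U * (T * G) = (T * G) * C"
proof -
  have "U * (T * G) = (U * T) * G" by (rule assoc_mult_mat[OF assms(1-2,4), symmetric])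
  also have "\<dots> = T * (B * G)" unfolding assms(6) by (rule assoc_mult_mat[OF assms(2-4)])
  also have "\<dots> = (T * G) * C" unfolding assms(7) by (rule assoc_mult_mat[OF assms(2,4,5), symmetric])
  finally show ?thesis .
qed

lemma bil_mult_mat_vec:
  fixes F T :: "'a::field mat"
  assumes F: "F \<in> carrier_mat N N" and T: "T \<in> carrier_mat N n"
    and x: "x \<in> carrier_vec n" and y: "y \<in> carrier_vec n"
  shows "bil F (T *\<^sub>v x) (T *\<^sub>v y) = bil (transpose_mat T * (F * T)) x y"
proof -
  have Tx: "T *\<^sub>v x \<in> carrier_vec N" and FTy: "F *\<^sub>v (T *\<^sub>v y) \<in> carrier_vec N" using F T x y by auto
  have "bil F (T *\<^sub>v x) (T *\<^sub>v y) = (F *\<^sub>v (T *\<^sub>v y)) \<bullet> (T *\<^sub>v x)"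
    unfolding bil_def by (rule comm_scalar_prod[OF Tx FTy])
  also have "\<dots> = (transpose_mat T *\<^sub>v (F *\<^sub>v (T *\<^sub>v y))) \<bullet> x"
    by (rule transpose_vec_mult_scalar[OF T x FTy, symmetric])
  also have "\<dots> = x \<bullet> (transpose_mat T *\<^sub>v (F *\<^sub>v (T *\<^sub>v y)))"
    by (rule comm_scalar_prod) (use T FTy x in auto)
  also have "transpose_mat T *\<^sub>v (F *\<^sub>v (T *\<^sub>v y)) = (transpose_mat T * (F * T)) *\<^sub>v y"
  proof -
    have TT: "transpose_mat T \<in> carrier_mat n N" using T by simp
    have FT: "F * T \<in> carrier_mat N n" using F T by simp
    have "(transpose_mat T * (F * T)) *\<^sub>v y = transpose_mat T *\<^sub>v ((F * T) *\<^sub>v y)"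
      by (rule assoc_mult_mat_vec[OF TT FT y])
    also have "(F * T) *\<^sub>v y = F *\<^sub>v (T *\<^sub>v y)" by (rule assoc_mult_mat_vec[OF F T y])
    finally show ?thesis by simp
  qed
  finally show ?thesis unfolding bil_def .
qed

lemma intertwiner_mult_vec:
  assumes "U \<in> carrier_mat N N" "G \<in> carrier_mat N n" "C \<in> carrier_mat n n" "U * G = G * C"
    and "a \<in> carrier_vec n"
  shows "U *\<^sub>v (G *\<^sub>v a) = G *\<^sub>v (C *\<^sub>v (a :: 'a::field vec))"
  using assms by (metis assoc_mult_mat_vec)

lemma mult_mat_vec_inj_on:
  fixes G :: "'a::field mat"
  assumes G: "G \<in> carrier_mat N n"
    and inj: "\<And>a. a \<in> carrier_vec n \<Longrightarrow> G *\<^sub>v a = 0\<^sub>v N \<Longrightarrow> a = 0\<^sub>v n"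
  shows "inj_on (\<lambda>a. G *\<^sub>v a) (carrier_vec n)"
proof (rule inj_onI)
  fix a b assume a: "a \<in> carrier_vec n" and b: "b \<in> carrier_vec n" and e: "G *\<^sub>v a = G *\<^sub>v b"
  have "G *\<^sub>v (a - b) = 0\<^sub>v N" using mult_minus_distrib_mat_vec[OF G a b] e G b by simp
  then have ab: "a - b = 0\<^sub>v n" using inj a b by simp
  show "a = b"
  proof (rule eq_vecI)
    fix i assume i: "i < dim_vec b"
    then have "(a - b) $ i = 0" using ab b by simp
    then show "a $ i = b $ i" using i a b by simp
  qed (use a b in simp)
qed

lemma range_submodule:
  fixes U G C :: "'a::field mat"
  assumes U: "U \<in> carrier_mat N N" and G: "G \<in> carrier_mat N n" and C: "C \<in> carrier_mat n n"
    and rel: "U * G = G * C"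
  shows "submodule_of U ((\<lambda>a. G *\<^sub>v a) ` carrier_vec n)"
  unfolding submodule_of_def subspace_of_def
proof (intro conjI ballI allI)
  let ?W = "(\<lambda>a. G *\<^sub>v a) ` carrier_vec n"
  show "?W \<subseteq> carrier_vec (dim_row U)" using G U by auto
  show "0\<^sub>v (dim_row U) \<in> ?W" using G U by (intro image_eqI[of _ _ "0\<^sub>v n"]) auto
  fix x assume "x \<in> ?W"
  then obtain a where a: "a \<in> carrier_vec n" and x: "x = G *\<^sub>v a" by auto
  { fix y assume "y \<in> ?W"
    then obtain b where b: "b \<in> carrier_vec n" and y: "y = G *\<^sub>v b" by auto
    show "x + y \<in> ?W" unfolding x y using mult_add_distrib_mat_vec[OF G a b, symmetric] a b by auto }
  { fix c show "c \<cdot>\<^sub>v x \<in> ?W" unfolding x using mult_mat_vec[OF G a, symmetric] a by auto }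
  show "U *\<^sub>v x \<in> ?W" unfolding x using intertwiner_mult_vec[OF U G C rel a] a C by auto
qed

lemma range_module_iso:
  fixes U G C :: "'a::field mat"
  assumes U: "U \<in> carrier_mat N N" and G: "G \<in> carrier_mat N n" and C: "C \<in> carrier_mat n n"
    and rel: "U * G = G * C"
    and inj: "\<And>a. a \<in> carrier_vec n \<Longrightarrow> G *\<^sub>v a = 0\<^sub>v N \<Longrightarrow> a = 0\<^sub>v n"
  shows "module_iso U ((\<lambda>a. G *\<^sub>v a) ` carrier_vec n) C"
  unfolding module_iso_def
proof (intro exI[of _ "inv_into (carrier_vec n) (\<lambda>a. G *\<^sub>v a)"] conjI ballI allI)
  let ?W = "(\<lambda>a. G *\<^sub>v a) ` carrier_vec n" and ?f = "inv_into (carrier_vec n) (\<lambda>a. G *\<^sub>v a)"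
  note injon = mult_mat_vec_inj_on[OF G inj]
  have ff: "?f (G *\<^sub>v a) = a" if "a \<in> carrier_vec n" for a using injon that by simp
  show "bij_betw ?f ?W (carrier_vec (dim_row C))"
    using bij_betw_inv_into[of "\<lambda>a. G *\<^sub>v a" "carrier_vec n" ?W] injon C by (simp add: bij_betw_def)
  fix x assume "x \<in> ?W"
  then obtain a where a: "a \<in> carrier_vec n" and x: "x = G *\<^sub>v a" by auto
  { fix y assume "y \<in> ?W"
    then obtain b where b: "b \<in> carrier_vec n" and y: "y = G *\<^sub>v b" by auto
    show "?f (x + y) = ?f x + ?f y" unfolding x y mult_add_distrib_mat_vec[OF G a b, symmetric] using ff a b by simp }
  { fix c show "?f (c \<cdot>\<^sub>v x) = c \<cdot>\<^sub>v ?f x" unfolding x mult_mat_vec[OF G a, symmetric] using ff a by simp }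
  show "?f (U *\<^sub>v x) = C *\<^sub>v ?f x" unfolding x intertwiner_mult_vec[OF U G C rel a] using ff a C by simp
qed

lemma intertwiner_pair_transfer:
  fixes U M T Ti F G1 G2 C :: "'a::field mat"
  assumes T: "T \<in> carrier_mat N N" and Ti: "Ti \<in> carrier_mat N N" and TiT: "Ti * T = 1\<^sub>m N"
    and U: "U \<in> carrier_mat N N" and M: "M \<in> carrier_mat N N" and UT: "U * T = T * M"
    and F: "F \<in> carrier_mat N N" and G1: "G1 \<in> carrier_mat N n" and G2: "G2 \<in> carrier_mat N n"
    and C: "C \<in> carrier_mat n n" and rel1: "M * G1 = G1 * C" and rel2: "M * G2 = G2 * C"
    and indep: "\<And>a b. a \<in> carrier_vec n \<Longrightarrow> b \<in> carrier_vec n \<Longrightarrow>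
        G1 *\<^sub>v a + G2 *\<^sub>v b = 0\<^sub>v N \<Longrightarrow> a = 0\<^sub>v n \<and> b = 0\<^sub>v n"
    and orth: "\<And>a b. a \<in> carrier_vec n \<Longrightarrow> b \<in> carrier_vec n \<Longrightarrow>
        bil (transpose_mat T * (F * T)) (G1 *\<^sub>v a) (G2 *\<^sub>v b) = 0"
  shows "U * (T * G1) = (T * G1) * C" "U * (T * G2) = (T * G2) * C"
    "\<And>a b. a \<in> carrier_vec n \<Longrightarrow> b \<in> carrier_vec n \<Longrightarrow>
        (T * G1) *\<^sub>v a + (T * G2) *\<^sub>v b = 0\<^sub>v N \<Longrightarrow> a = 0\<^sub>v n \<and> b = 0\<^sub>v n"
    "\<And>a b. a \<in> carrier_vec n \<Longrightarrow> b \<in> carrier_vec n \<Longrightarrow>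
        bil F ((T * G1) *\<^sub>v a) ((T * G2) *\<^sub>v b) = 0"
proof -
  show "U * (T * G1) = (T * G1) * C" by (rule intertwiner_mult[OF U T M G1 C UT rel1])
  show "U * (T * G2) = (T * G2) * C" by (rule intertwiner_mult[OF U T M G2 C UT rel2])
  fix a b :: "'a vec" assume a: "a \<in> carrier_vec n" and b: "b \<in> carrier_vec n"
  have Ga: "G1 *\<^sub>v a \<in> carrier_vec N" and Gb: "G2 *\<^sub>v b \<in> carrier_vec N" using G1 G2 a b by auto
  have TG: "(T * G1) *\<^sub>v a = T *\<^sub>v (G1 *\<^sub>v a)" "(T * G2) *\<^sub>v b = T *\<^sub>v (G2 *\<^sub>v b)"
    using assoc_mult_mat_vec[OF T G1 a] assoc_mult_mat_vec[OF T G2 b] .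
  show "a = 0\<^sub>v n \<and> b = 0\<^sub>v n" if "(T * G1) *\<^sub>v a + (T * G2) *\<^sub>v b = 0\<^sub>v N"
  proof -
    have "T *\<^sub>v (G1 *\<^sub>v a + G2 *\<^sub>v b) = 0\<^sub>v N"
      using that TG mult_add_distrib_mat_vec[OF T Ga Gb] by simp
    then have "G1 *\<^sub>v a + G2 *\<^sub>v b = 0\<^sub>v N"
      using left_invertible_injective[OF Ti T TiT] Ga Gb by simp
    then show ?thesis using indep[OF a b] by simp
  qed
  show "bil F ((T * G1) *\<^sub>v a) ((T * G2) *\<^sub>v b) = 0"
    using bil_mult_mat_vec[OF F T Ga Gb] orth[OF a b] TG by simp
qed

(* The block matrix [G1 | G2] is square and injective, hence invertible. *)
lemma independent_columns_span:
  fixes G1 G2 :: "'a::field mat"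
  assumes G1: "G1 \<in> carrier_mat (n+n) n" and G2: "G2 \<in> carrier_mat (n+n) n"
    and indep: "\<And>a b. a \<in> carrier_vec n \<Longrightarrow> b \<in> carrier_vec n \<Longrightarrow>
        G1 *\<^sub>v a + G2 *\<^sub>v b = 0\<^sub>v (n+n) \<Longrightarrow> a = 0\<^sub>v n \<and> b = 0\<^sub>v n"
    and v: "v \<in> carrier_vec (n+n)"
  shows "\<exists>a\<in>carrier_vec n. \<exists>b\<in>carrier_vec n. v = G1 *\<^sub>v a + G2 *\<^sub>v b"
proof -
  define M where "M = four_block_mat G1 G2 (0\<^sub>m 0 n) (0\<^sub>m 0 n)"
  have M: "M \<in> carrier_mat (n+n) (n+n)"
    using four_block_carrier_mat[OF G1, of "0\<^sub>m 0 n" 0 n] unfolding M_def by simp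
  have Mv: "M *\<^sub>v (a @\<^sub>v b) = G1 *\<^sub>v a + G2 *\<^sub>v b"
    if a: "a \<in> carrier_vec n" and b: "b \<in> carrier_vec n" for a b
  proof -
    have "M *\<^sub>v (a @\<^sub>v b) = (G1 *\<^sub>v a + G2 *\<^sub>v b) @\<^sub>v (0\<^sub>m 0 n *\<^sub>v a + 0\<^sub>m 0 n *\<^sub>v b)"
      unfolding M_def by (rule four_block_mat_mult_vec[OF G1 G2 zero_carrier_mat zero_carrier_mat a b])
    also have "\<dots> = G1 *\<^sub>v a + G2 *\<^sub>v b" by (intro eq_vecI) auto
    finally show ?thesis .
  qed
  have "x = 0\<^sub>v (n+n)" if x: "x \<in> carrier_vec (n+n)" and z: "M *\<^sub>v x = 0\<^sub>v (n+n)" for x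
  proof -
    have "M *\<^sub>v x = G1 *\<^sub>v vec_first x n + G2 *\<^sub>v vec_last x n"
      using Mv[of "vec_first x n" "vec_last x n"] vec_first_last_append[OF x] by simp
    then have "vec_first x n = 0\<^sub>v n \<and> vec_last x n = 0\<^sub>v n"
      using indep[of "vec_first x n" "vec_last x n"] z by simp
    then have "x = 0\<^sub>v n @\<^sub>v 0\<^sub>v n" using vec_first_last_append[OF x] by simp
    also have "\<dots> = 0\<^sub>v (n+n)" by (intro eq_vecI) auto
    finally show ?thesis .
  qed
  then obtain Mi where Mi: "Mi \<in> carrier_mat (n+n) (n+n)" "M * Mi = 1\<^sub>m (n+n)"
    using injective_mat_invertible[OF M] by blast
  have "v = M *\<^sub>v (vec_first (Mi *\<^sub>v v) n @\<^sub>v vec_last (Mi *\<^sub>v v) n)"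
    using Mi M v by (simp add: assoc_mult_mat_vec[symmetric])
  then have "v = G1 *\<^sub>v vec_first (Mi *\<^sub>v v) n + G2 *\<^sub>v vec_last (Mi *\<^sub>v v) n"
    using Mv[of "vec_first (Mi *\<^sub>v v) n" "vec_last (Mi *\<^sub>v v) n"] by simp
  then show ?thesis using vec_first_carrier vec_last_carrier by blast
qed

lemma orthogonal_decomposition_of_intertwiners:
  fixes U F G1 G2 C :: "'a::field mat"
  assumes U: "U \<in> carrier_mat (n+n) (n+n)" and G1: "G1 \<in> carrier_mat (n+n) n"
    and G2: "G2 \<in> carrier_mat (n+n) n" and C: "C \<in> carrier_mat n n"
    and rel1: "U * G1 = G1 * C" and rel2: "U * G2 = G2 * C"
    and indep: "\<And>a b. a \<in> carrier_vec n \<Longrightarrow> b \<in> carrier_vec n \<Longrightarrow>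
        G1 *\<^sub>v a + G2 *\<^sub>v b = 0\<^sub>v (n+n) \<Longrightarrow> a = 0\<^sub>v n \<and> b = 0\<^sub>v n"
    and orth: "\<And>a b. a \<in> carrier_vec n \<Longrightarrow> b \<in> carrier_vec n \<Longrightarrow> bil F (G1 *\<^sub>v a) (G2 *\<^sub>v b) = 0"
  shows "\<exists>W W'. submodule_of U W \<and> submodule_of U W' \<and> W \<inter> W' = {0\<^sub>v (n+n)} \<and>
     (\<forall>v\<in>carrier_vec (n+n). \<exists>w\<in>W. \<exists>w'\<in>W'. v = w + w') \<and>
     (\<forall>w\<in>W. \<forall>w'\<in>W'. bil F w w' = 0) \<and> module_iso U W C \<and> module_iso U W' C"
proof (intro exI conjI)
  let ?W = "(\<lambda>a. G1 *\<^sub>v a) ` carrier_vec n" and ?W' = "(\<lambda>b. G2 *\<^sub>v b) ` carrier_vec n"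
  have "a = 0\<^sub>v n" if "a \<in> carrier_vec n" "G1 *\<^sub>v a = 0\<^sub>v (n+n)" for a
    using indep[of a "0\<^sub>v n"] that mult_mat_vec_zero[OF G2] by simp
  then show "module_iso U ?W C" by (rule range_module_iso[OF U G1 C rel1])
  show "submodule_of U ?W" by (rule range_submodule[OF U G1 C rel1])
  have "b = 0\<^sub>v n" if "b \<in> carrier_vec n" "G2 *\<^sub>v b = 0\<^sub>v (n+n)" for b
    using indep[of "0\<^sub>v n" b] that mult_mat_vec_zero[OF G1] by simp
  then show "module_iso U ?W' C" by (rule range_module_iso[OF U G2 C rel2])
  show "submodule_of U ?W'" by (rule range_submodule[OF U G2 C rel2])
  show "\<forall>v\<in>carrier_vec (n+n). \<exists>w\<in>?W. \<exists>w'\<in>?W'. v = w + w'"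
    using independent_columns_span[OF G1 G2 indep] by blast
  show "\<forall>w\<in>?W. \<forall>w'\<in>?W'. bil F w w' = 0" using orth by blast
  show "?W \<inter> ?W' = {0\<^sub>v (n+n)}"
  proof
    show "{0\<^sub>v (n+n)} \<subseteq> ?W \<inter> ?W'"
      using mult_mat_vec_zero[OF G1] mult_mat_vec_zero[OF G2] by (auto intro!: image_eqI[of _ _ "0\<^sub>v n"])
    show "?W \<inter> ?W' \<subseteq> {0\<^sub>v (n+n)}"
    proof
      fix w assume "w \<in> ?W \<inter> ?W'"
      then obtain a b where a: "a \<in> carrier_vec n" and b: "b \<in> carrier_vec n"
        and wa: "w = G1 *\<^sub>v a" and wb: "w = G2 *\<^sub>v b" by auto
      have "G1 *\<^sub>v a + G2 *\<^sub>v (0\<^sub>v n - b) = 0\<^sub>v (n+n)"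
        using mult_minus_distrib_mat_vec[OF G2 _ b, of "0\<^sub>v n"] mult_mat_vec_zero[OF G2] G1 G2 a b wa wb
        by simp
      then have "a = 0\<^sub>v n" using indep[of a "- b"] a b by simp
      then show "w \<in> {0\<^sub>v (n+n)}" using wa mult_mat_vec_zero[OF G1] by simp
    qed
  qed
qed

section \<open>Kronecker products\<close>

lemma kron_carrier: "A \<in> carrier_mat n1 m1 \<Longrightarrow> B \<in> carrier_mat n2 m2 \<Longrightarrow> kron A B \<in> carrier_mat (n1*n2) (m1*m2)"
  unfolding kron_def by auto

lemma kron_index: "A \<in> carrier_mat n1 m1 \<Longrightarrow> B \<in> carrier_mat n2 m2 \<Longrightarrow> i < n1*n2 \<Longrightarrow> j < m1*m2 \<Longrightarrow>
  kron A B $$ (i,j) = A $$ (i div n2, j div m2) * B $$ (i mod n2, j mod m2)"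
  unfolding kron_def by auto

lemma kron_mult:
  fixes A :: "'a::field mat"
  assumes A: "A \<in> carrier_mat n1 m1" and B: "B \<in> carrier_mat n2 m2"
    and C: "C \<in> carrier_mat m1 p1" and D: "D \<in> carrier_mat m2 p2"
  shows "kron A B * kron C D = kron (A*C) (B*D)"
proof (rule eq_matI)
  fix i j assume i: "i < dim_row (kron (A*C) (B*D))" and j: "j < dim_col (kron (A*C) (B*D))"
  have i': "i < n1*n2" and j': "j < p1*p2" using i j A B C D unfolding kron_def by auto
  have n2: "n2 > 0" and p2: "p2 > 0" using i' j' by (auto intro: ccontr)
  have "(kron A B * kron C D) $$ (i,j) = (\<Sum>t<m1*m2. kron A B $$ (i,t) * kron C D $$ (t,j))"
    using kron_carrier[OF A B] kron_carrier[OF C D] i' j'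
    by (simp add: scalar_prod_def atLeast0LessThan)
  also have "\<dots> = (\<Sum>a<m1. \<Sum>b<m2. kron A B $$ (i,a*m2+b) * kron C D $$ (a*m2+b,j))"
    by (rule sum_lessThan_mult)
  also have "\<dots> = (\<Sum>a<m1. \<Sum>b<m2. (A $$ (i div n2, a) * C $$ (a, j div p2)) * (B $$ (i mod n2, b) * D $$ (b, j mod p2)))"
  proof (intro sum.cong refl)
    fix a b assume a: "a \<in> {..<m1}" and b: "b \<in> {..<m2}"
    have ab: "a*m2+b < m1*m2" using mult_add_less_mult a b by auto
    show "kron A B $$ (i,a*m2+b) * kron C D $$ (a*m2+b,j) = (A $$ (i div n2, a) * C $$ (a, j div p2)) * (B $$ (i mod n2, b) * D $$ (b, j mod p2))"
      using kron_index[OF A B i' ab] kron_index[OF C D ab j'] b by (simp add: mult_ac)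
  qed
  also have "\<dots> = (\<Sum>a<m1. A $$ (i div n2, a) * C $$ (a, j div p2)) * (\<Sum>b<m2. B $$ (i mod n2, b) * D $$ (b, j mod p2))"
    by (simp add: sum_product)
  also have "\<dots> = kron (A*C) (B*D) $$ (i,j)"
    apply (subst kron_index[OF mult_carrier_mat[OF A C] mult_carrier_mat[OF B D] i' j'])
    using A B C D i' j' n2 p2
    by (simp add: scalar_prod_def atLeast0LessThan less_mult_imp_div_less)
  finally show "(kron A B * kron C D) $$ (i,j) = kron (A*C) (B*D) $$ (i,j)" .
qed (insert A B C D, auto simp: kron_def)

lemma kron_one: "kron (1\<^sub>m n) (1\<^sub>m m) = (1\<^sub>m (n*m) :: 'a::field mat)"
proof (rule eq_matI)
  fix i j assume "i < dim_row (1\<^sub>m (n*m) :: 'a mat)" "j < dim_col (1\<^sub>m (n*m) :: 'a mat)"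
  hence i: "i < n*m" and j: "j < n*m" by auto
  have m: "m > 0" using i by (auto intro: ccontr)
  have "(i div m = j div m \<and> i mod m = j mod m) = (i = j)"
    by (metis div_mult_mod_eq)
  then show "kron (1\<^sub>m n) (1\<^sub>m m) $$ (i,j) = (1\<^sub>m (n*m) :: 'a mat) $$ (i,j)"
    using kron_index[OF one_carrier_mat one_carrier_mat i j] i j m
    by (auto simp: less_mult_imp_div_less)
qed (auto simp: kron_def)

lemma kron_transpose: "A \<in> carrier_mat n1 m1 \<Longrightarrow> B \<in> carrier_mat n2 m2 \<Longrightarrow>
  transpose_mat (kron A B) = kron (transpose_mat A) (transpose_mat B)"
proof (rule eq_matI)
  fix i j assume A: "A \<in> carrier_mat n1 m1" and B: "B \<in> carrier_mat n2 m2"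
    and i: "i < dim_row (kron (transpose_mat A) (transpose_mat B))" and j: "j < dim_col (kron (transpose_mat A) (transpose_mat B))"
  have i': "i < m1*m2" and j': "j < n1*n2" using i j A B by (auto simp: kron_def)
  have "m2 > 0" "n2 > 0" using i' j' by (auto intro: ccontr)
  then show "transpose_mat (kron A B) $$ (i,j) = kron (transpose_mat A) (transpose_mat B) $$ (i,j)"
    using A B i' j' by (auto simp: kron_def less_mult_imp_div_less)
qed (auto simp: kron_def)

lemma kron_intertwiner:
  fixes U1 U2 P Q B1 B2 :: "'a::field mat"
  assumes "U1 \<in> carrier_mat n n" "P \<in> carrier_mat n n" "B1 \<in> carrier_mat n n"
    and "U2 \<in> carrier_mat m m" "Q \<in> carrier_mat m m" "B2 \<in> carrier_mat m m"
    and "U1 * P = P * B1" "U2 * Q = Q * B2"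
  shows "kron U1 U2 * kron P Q = kron P Q * kron B1 B2"
  using kron_mult[OF assms(1,4,2,5)] kron_mult[OF assms(2,5,3,6)] assms(7,8) by simp

lemma kron_congruence:
  fixes F G P Q :: "'a::field mat"
  assumes F: "F \<in> carrier_mat n n" and P: "P \<in> carrier_mat n n"
    and G: "G \<in> carrier_mat m m" and Q: "Q \<in> carrier_mat m m"
  shows "transpose_mat (kron P Q) * (kron F G * kron P Q)
    = kron (transpose_mat P * (F * P)) (transpose_mat Q * (G * Q))"
proof -
  have "kron F G * kron P Q = kron (F * P) (G * Q)" by (rule kron_mult[OF F G P Q])
  moreover have "transpose_mat (kron P Q) = kron (transpose_mat P) (transpose_mat Q)"
    by (rule kron_transpose[OF P Q])
  ultimately show ?thesis
    using kron_mult[of "transpose_mat P" n n "transpose_mat Q" m m "F * P" n "G * Q" m] F G P Q by simp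
qed

lemma kron_left_inverse:
  fixes A B Ai Bi :: "'a::field mat"
  assumes "Ai \<in> carrier_mat n N" "A \<in> carrier_mat N n" "Ai * A = 1\<^sub>m n"
    and "Bi \<in> carrier_mat m M" "B \<in> carrier_mat M m" "Bi * B = 1\<^sub>m m"
  shows "kron Ai Bi * kron A B = 1\<^sub>m (n*m)"
  using kron_mult[OF assms(1,4,2,5)] assms(3,6) kron_one by simp

section \<open>Jordan blocks and induction from an index-2 subgroup\<close>

lemma Jblock_carrier: "Jblock m \<in> carrier_mat m m" unfolding Jblock_def by auto
lemma Jblock_index: "a < m \<Longrightarrow> b < m \<Longrightarrow> Jblock m $$ (a,b) = (if a = b \<or> a + 1 = b then 1 else 0)"
  unfolding Jblock_def by auto

lemma Ind2_carrier: "A \<in> carrier_mat n n \<Longrightarrow> Ind2 A \<in> carrier_mat (2*n) (2*n)"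
  unfolding Ind2_def by (auto simp: mult_2)

lemma Ind2_index: assumes A: "A \<in> carrier_mat n n" and t: "t < 2*n" and j: "j < 2*n"
  shows "Ind2 A $$ (t,j) = (if t < n then (if j < n then 0 else A $$ (t, j-n)) else (if j < n then (if t - n = j then 1 else 0) else 0))"
  using A t j unfolding Ind2_def by (auto simp: mult_2)

lemma Jblock_injective:
  "y \<in> carrier_vec m \<Longrightarrow> (Jblock m :: 'a::field mat) *\<^sub>v y = 0\<^sub>v m \<Longrightarrow> y = 0\<^sub>v m"
  by (rule unitriangular_mat_injective[OF Jblock_carrier]) (auto simp: upper_triangular_def Jblock_def)

lemma Ind2_mult_append:
  assumes A: "A \<in> carrier_mat n n" and x: "x \<in> carrier_vec n" and y: "y \<in> carrier_vec n"
  shows "Ind2 A *\<^sub>v (x @\<^sub>v y) = (A *\<^sub>v y) @\<^sub>v (x :: 'a::field vec)"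
proof -
  have "Ind2 A *\<^sub>v (x @\<^sub>v y) = (0\<^sub>m n n *\<^sub>v x + A *\<^sub>v y) @\<^sub>v (1\<^sub>m n *\<^sub>v x + 0\<^sub>m n n *\<^sub>v y)"
    unfolding Ind2_def using A
    by (simp add: four_block_mat_mult_vec[OF zero_carrier_mat A one_carrier_mat zero_carrier_mat x y])
  then show ?thesis using A x y by auto
qed

lemma Ind2_injective:
  fixes A :: "'a::field mat"
  assumes A: "A \<in> carrier_mat n n"
    and inj: "\<And>y. y \<in> carrier_vec n \<Longrightarrow> A *\<^sub>v y = 0\<^sub>v n \<Longrightarrow> y = 0\<^sub>v n"
    and v: "v \<in> carrier_vec (2*n)" and z: "Ind2 A *\<^sub>v v = 0\<^sub>v (2*n)"
  shows "v = 0\<^sub>v (2*n)"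
proof -
  define x y where "x = vec_first v n" and "y = vec_last v n"
  have x: "x \<in> carrier_vec n" and y: "y \<in> carrier_vec n" unfolding x_def y_def by auto
  have v: "v = x @\<^sub>v y" using v unfolding x_def y_def by (simp add: mult_2)
  have "(A *\<^sub>v y) @\<^sub>v x = 0\<^sub>v n @\<^sub>v 0\<^sub>v n"
    using z Ind2_mult_append[OF A x y] unfolding v by (auto simp: mult_2)
  then have "A *\<^sub>v y = 0\<^sub>v n \<and> x = 0\<^sub>v n" using append_vec_eq[of "A *\<^sub>v y" n "0\<^sub>v n"] A y by simp
  then show ?thesis unfolding v using inj[OF y] by (auto simp: mult_2)
qed

section \<open>The module V(2m)\<close>

lemma Vu_carrier: "Vu d \<in> carrier_mat d d" unfolding Vu_def by auto

lemma Vu_dims[simp]: "dim_row (Vu d) = d" "dim_col (Vu d) = d" unfolding Vu_def by auto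

lemma Vu_index: "r < d \<Longrightarrow> c < d \<Longrightarrow> Vu d $$ (r,c) = (if c = 0 then (if r = 0 then 1 else 0)
   else if c \<le> d div 2 then (if r \<le> c then 1 else 0) else (if r = c \<or> r + 1 = c then 1 else 0))"
  unfolding Vu_def by (auto simp: Let_def)

lemma Vu_below_diag: "r < d \<Longrightarrow> c < r \<Longrightarrow> Vu d $$ (r,c) = 0"
  by (simp add: Vu_index)
lemma Vu_diag: "r < d \<Longrightarrow> Vu d $$ (r,r) = 1"
  by (simp add: Vu_index)
lemma Vu_superdiag: "r + 1 < d \<Longrightarrow> Vu d $$ (r,r+1) = 1"
  by (simp add: Vu_index)

definition Vnil :: "nat \<Rightarrow> 'a::field vec \<Rightarrow> 'a vec" where "Vnil d v = Vu d *\<^sub>v v - v"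

lemma Vnil_carrier: "v \<in> carrier_vec d \<Longrightarrow> Vnil d v \<in> carrier_vec d"
  unfolding Vnil_def by (rule minus_carrier_vec[OF mult_mat_vec_carrier[OF Vu_carrier]])

lemma Vnil_index: "v \<in> carrier_vec d \<Longrightarrow> r < d \<Longrightarrow> Vnil d v $ r = (Vu d *\<^sub>v v) $ r - v $ r"
  unfolding Vnil_def using Vu_carrier by auto

lemma Vnil_vanishes_below:
  assumes v: "v \<in> carrier_vec d" and z: "\<forall>c<d. j < c \<longrightarrow> v $ c = 0" and r: "r < d" "j \<le> r"
  shows "Vnil d v $ r = 0"
proof -
  have "(\<Sum>c<d. Vu d $$ (r,c) * v $ c) = (\<Sum>c<d. if c = r then v $ c else 0)"
  proof (rule sum.cong[OF refl])
    fix c assume c: "c \<in> {..<d}"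
    show "Vu d $$ (r,c) * v $ c = (if c = r then v $ c else 0)"
      using Vu_below_diag[OF r(1), of c] Vu_diag[OF r(1)] z c r by (cases "c < r"; cases "c = r"; auto)
  qed
  also have "\<dots> = v $ r" using r by (simp add: sum.delta')
  finally show ?thesis using Vnil_index[OF v r(1)] mult_mat_vec_index_sum[OF Vu_carrier v r(1)] by simp
qed

lemma Vnil_shift:
  assumes v: "v \<in> carrier_vec d" and z: "\<forall>c<d. j < c \<longrightarrow> v $ c = 0" and j: "0 < j" "j < d"
  shows "Vnil d v $ (j - 1) = v $ j"
proof -
  have r: "j - 1 < d" using j by auto
  have "(\<Sum>c<d. Vu d $$ (j-1,c) * v $ c) = (\<Sum>c<d. (if c = j - 1 then v $ c else 0) + (if c = j then v $ c else 0))"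
  proof (rule sum.cong[OF refl])
    fix c assume c: "c \<in> {..<d}"
    show "Vu d $$ (j-1,c) * v $ c = (if c = j - 1 then v $ c else 0) + (if c = j then v $ c else 0)"
      using Vu_below_diag[OF r, of c] Vu_diag[OF r] Vu_superdiag[of "j-1" d] z c j by (cases "c < j - 1"; cases "c = j - 1"; cases "c = j"; auto)
  qed
  also have "\<dots> = v $ (j-1) + v $ j" using j by (simp add: sum.distrib sum.delta')
  finally show ?thesis using Vnil_index[OF v r] mult_mat_vec_index_sum[OF Vu_carrier v r] by simp
qed

fun Vchain :: "nat \<Rightarrow> nat \<Rightarrow> 'a::field vec" where
  "Vchain d 0 = unit_vec d (d - 1)"
| "Vchain d (Suc s) = Vnil d (Vchain d s)"

lemma Vchain_carrier: "(Vchain d s :: 'a::field vec) \<in> carrier_vec d"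
  by (induction s) (auto simp: Vnil_carrier)

lemma Vchain_zero_below: "r < d \<Longrightarrow> d \<le> r + s \<Longrightarrow> (Vchain d s :: 'a::field vec) $ r = 0"
proof (induction s arbitrary: r)
  case (Suc s)
  have "\<forall>c<d. d - 1 - s < c \<longrightarrow> (Vchain d s :: 'a vec) $ c = 0"
    by (intro allI impI Suc.IH) linarith+
  moreover have "d - 1 - s \<le> r" using Suc.prems by linarith
  ultimately show ?case using Vnil_vanishes_below[OF Vchain_carrier _ Suc.prems(1)] by simp
qed simp

lemma Vchain_leading: "s < d \<Longrightarrow> (Vchain d s :: 'a::field vec) $ (d - 1 - s) = 1"
proof (induction s)
  case (Suc s)
  have "\<forall>c<d. d - 1 - s < c \<longrightarrow> (Vchain d s :: 'a vec) $ c = 0"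
    by (intro allI impI Vchain_zero_below) linarith+
  then have "Vnil d (Vchain d s) $ (d - 1 - s - 1) = (Vchain d s :: 'a vec) $ (d - 1 - s)"
    using Vnil_shift[OF Vchain_carrier, of d "d - 1 - s"] Suc.prems by simp
  moreover have "d - 1 - s - 1 = d - 1 - Suc s" by simp
  ultimately show ?case using Suc by simp
qed simp

(* With 0-based indices, in_even_span says v \<in> span {e_2, e_4, ...} and in_pair_span says
   v \<in> span {e_1 + e_2, e_3 + e_4, ...}. *)
definition in_even_span :: "nat \<Rightarrow> 'a::field vec \<Rightarrow> bool" where
  "in_even_span d v \<longleftrightarrow> (\<forall>t. 2*t < d \<longrightarrow> v $ (2*t) = 0)"
definition in_pair_span :: "nat \<Rightarrow> 'a::field vec \<Rightarrow> bool" where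
  "in_pair_span d v \<longleftrightarrow> (\<forall>t. 2*t+1 < d \<longrightarrow> v $ (2*t) = v $ (2*t+1))"

lemma in_pair_span_Vu:
  fixes v :: "'a::field vec"
  assumes v: "v \<in> carrier_vec (2*m)" and X: "in_even_span (2*m) v"
  shows "in_pair_span (2*m) (Vu (2*m) *\<^sub>v v)"
  unfolding in_pair_span_def
proof (intro allI impI)
  fix t assume t: "2*t+1 < 2*m"
  have "(\<Sum>c<2*m. (Vu (2*m) :: 'a mat) $$ (2*t,c) * v $ c) = (\<Sum>c<2*m. (Vu (2*m) :: 'a mat) $$ (2*t+1,c) * v $ c)"
  proof (rule sum.cong[OF refl])
    fix c assume c: "c \<in> {..<2*m}"
    show "(Vu (2*m) :: 'a mat) $$ (2*t,c) * v $ c = (Vu (2*m) :: 'a mat) $$ (2*t+1,c) * v $ c"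
    proof (cases "even c")
      case True
      then obtain q where q: "c = 2*q" by blast
      then have "v $ c = 0" using X c unfolding in_even_span_def by auto
      then show ?thesis by simp
    next
      case False
      then obtain q where q: "c = 2*q+1" using oddE by blast
      have "(Vu (2*m) :: 'a mat) $$ (2*t,c) = (Vu (2*m) :: 'a mat) $$ (2*t+1,c)"
        using t c q by (simp add: Vu_index)
      then show ?thesis by simp
    qed
  qed
  then show "(Vu (2*m) *\<^sub>v v) $ (2*t) = (Vu (2*m) *\<^sub>v v) $ (2*t+1)"
    using mult_mat_vec_index_sum[OF Vu_carrier v] t by simp
qed

lemma in_even_span_Vu:
  assumes m: "odd m" and two: "(2::'a::field) = 0"
    and v: "(v::'a vec) \<in> carrier_vec (2*m)" and Y: "in_pair_span (2*m) v"
  shows "in_even_span (2*m) (Vu (2*m) *\<^sub>v v)"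
  unfolding in_even_span_def
proof (intro allI impI)
  fix t assume t: "2*t < 2*m"
  have "(\<Sum>c<2*m. (Vu (2*m) :: 'a mat) $$ (2*t,c) * v $ c) = (\<Sum>s<m. (Vu (2*m) :: 'a mat) $$ (2*t,2*s) * v $ (2*s) + (Vu (2*m) :: 'a mat) $$ (2*t,2*s+1) * v $ (2*s+1))"
    by (rule sum_lessThan_pairs)
  also have "\<dots> = (\<Sum>s<m. 0)"
  proof (rule sum.cong[OF refl])
    fix s assume s: "s \<in> {..<m}"
    have e1: "(Vu (2*m) :: 'a mat) $$ (2*t,2*s) = (Vu (2*m) :: 'a mat) $$ (2*t,2*s+1)"
    proof -
      have o: "(2*s \<le> m) = (2*s+1 \<le> m)" using m by presburger
      have p: "2*t+1 \<noteq> 2*s" "2*t \<noteq> 2*s+1" by presburger+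
      have q: "(2*t \<le> 2*s) = (2*t \<le> 2*s+1)" by presburger
      have mm: "1 \<le> m" using m by (cases m) auto
      show ?thesis using t s o p q mm by (auto simp: Vu_index)
    qed
    have e2: "v $ (2*s) = v $ (2*s+1)" using Y s unfolding in_pair_span_def by auto
    show "(Vu (2*m) :: 'a mat) $$ (2*t,2*s) * v $ (2*s) + (Vu (2*m) :: 'a mat) $$ (2*t,2*s+1) * v $ (2*s+1) = 0"
      unfolding e1 e2 by (rule char_two_add_self[OF two])
  qed
  finally show "(Vu (2*m) *\<^sub>v v) $ (2*t) = 0"
    using mult_mat_vec_index_sum[OF Vu_carrier v] t by simp
qed

lemma Vu_square_char_two:
  assumes two: "(2::'a::field) = 0" and v: "(v::'a vec) \<in> carrier_vec d" and i: "i < d"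
  shows "(Vu d *\<^sub>v (Vu d *\<^sub>v v)) $ i = Vnil d (Vnil d v) $ i + v $ i"
proof -
  have Vv: "Vu d *\<^sub>v v \<in> carrier_vec d" using mult_mat_vec_carrier[OF Vu_carrier v] .
  have "Vnil d (Vnil d v) $ i = (Vu d *\<^sub>v (Vu d *\<^sub>v v - v)) $ i - (Vu d *\<^sub>v v - v) $ i"
    unfolding Vnil_def using Vu_carrier[of d] v i by simp
  also have "\<dots> = (Vu d *\<^sub>v (Vu d *\<^sub>v v)) $ i - (Vu d *\<^sub>v v) $ i - ((Vu d *\<^sub>v v) $ i - v $ i)"
    using mult_minus_distrib_mat_vec[OF Vu_carrier Vv v] Vv v i Vu_carrier[of d] by simp
  finally have e: "Vnil d (Vnil d v) $ i = (Vu d *\<^sub>v (Vu d *\<^sub>v v)) $ i - (Vu d *\<^sub>v v) $ i - ((Vu d *\<^sub>v v) $ i - v $ i)" .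
  have z: "\<And>x::'a. x + x = 0" using char_two_add_self[OF two] .
  have alg: "\<And>a b c::'a. a - b - (b - c) + c = a - (b + b) + (c + c)" by (simp add: algebra_simps)
  show ?thesis unfolding e alg z by simp
qed

lemma in_even_span_Vnil_square:
  assumes m: "odd m" and two: "(2::'a::field) = 0"
    and v: "(v::'a vec) \<in> carrier_vec (2*m)" and X: "in_even_span (2*m) v"
  shows "in_even_span (2*m) (Vnil (2*m) (Vnil (2*m) v))"
  unfolding in_even_span_def
proof (intro allI impI)
  fix t assume t: "2*t < 2*m"
  have "in_even_span (2*m) (Vu (2*m) *\<^sub>v (Vu (2*m) *\<^sub>v v))"
    using in_even_span_Vu[OF m two mult_mat_vec_carrier[OF Vu_carrier v] in_pair_span_Vu[OF v X]] .
  then have "(Vu (2*m) *\<^sub>v (Vu (2*m) *\<^sub>v v)) $ (2*t) = 0" using t unfolding in_even_span_def by auto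
  moreover have "v $ (2*t) = 0" using X t unfolding in_even_span_def by auto
  ultimately show "Vnil (2*m) (Vnil (2*m) v) $ (2*t) = 0" using Vu_square_char_two[OF two v t] by simp
qed

lemma in_even_span_Vchain:
  assumes m: "odd m" and two: "(2::'a::field) = 0"
  shows "in_even_span (2*m) (Vchain (2*m) (2*s) :: 'a vec)"
proof (induction s)
  case 0
  have "\<And>t. 2*t < 2*m \<Longrightarrow> 2*t \<noteq> 2*m - 1" by presburger
  then show ?case unfolding in_even_span_def by auto
next
  case (Suc s)
  have c: "(Vchain (2*m) (2*s) :: 'a vec) \<in> carrier_vec (2*m)" by (rule Vchain_carrier)
  have "Vchain (2*m) (2*Suc s) = (Vnil (2*m) (Vnil (2*m) (Vchain (2*m) (2*s))) :: 'a vec)" by simp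
  then show ?case using in_even_span_Vnil_square[OF m two c Suc] by simp
qed

lemma Vform_carrier: "Vform d \<in> carrier_mat d d" unfolding Vform_def by auto

lemma Vform_mult_vec_index:
  assumes w: "w \<in> carrier_vec d" and r: "r < d"
  shows "(Vform d *\<^sub>v w) $ r = w $ (d - 1 - r)"
proof -
  have "(Vform d *\<^sub>v w) $ r = (\<Sum>c<d. (if c = d - 1 - r then w $ c else 0))"
    unfolding mult_mat_vec_index_sum[OF Vform_carrier w r]
    by (rule sum.cong[OF refl]) (use r in \<open>auto simp: Vform_def\<close>)
  also have "\<dots> = w $ (d - 1 - r)" using r by (simp add: sum.delta')
  finally show ?thesis .
qed

lemma even_span_isotropic:
  assumes v: "v \<in> carrier_vec (2*m)" and w: "w \<in> carrier_vec (2*m)"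
    and X: "in_even_span (2*m) v" "in_even_span (2*m) w"
  shows "bil (Vform (2*m)) v w = 0"
proof -
  have "v \<bullet> (Vform (2*m) *\<^sub>v w) = (\<Sum>r<2*m. v $ r * (Vform (2*m) *\<^sub>v w) $ r)"
    by (rule scalar_prod_sum[OF mult_mat_vec_carrier[OF Vform_carrier w]])
  also have "\<dots> = (\<Sum>r<2*m. 0)"
  proof (rule sum.cong[OF refl])
    fix r assume r: "r \<in> {..<2*m}"
    show "v $ r * (Vform (2*m) *\<^sub>v w) $ r = 0"
    proof (cases "even r")
      case True
      then obtain q where "r = 2*q" by blast
      then have "v $ r = 0" using X(1) r unfolding in_even_span_def by auto
      then show ?thesis by simp
    next
      case False
      have "even (2*m - 1 - r)" using False r by presburger
      then obtain q where q: "2*m - 1 - r = 2*q" by blast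
      have "2*q < 2*m" using q r by auto
      then have "w $ (2*m - 1 - r) = 0" using X(2) q unfolding in_even_span_def by auto
      then show ?thesis using Vform_mult_vec_index[OF w] r by simp
    qed
  qed
  finally show ?thesis by (simp add: bil_def)
qed

lemma pair_span_isotropic:
  assumes two: "(2::'a::field) = 0"
    and v: "(v::'a vec) \<in> carrier_vec (2*m)" and w: "w \<in> carrier_vec (2*m)"
    and Y: "in_pair_span (2*m) v" "in_pair_span (2*m) w"
  shows "bil (Vform (2*m)) v w = 0"
proof -
  have "v \<bullet> (Vform (2*m) *\<^sub>v w) = (\<Sum>r<2*m. v $ r * (Vform (2*m) *\<^sub>v w) $ r)"
    by (rule scalar_prod_sum[OF mult_mat_vec_carrier[OF Vform_carrier w]])
  also have "\<dots> = (\<Sum>s<m. v $ (2*s) * (Vform (2*m) *\<^sub>v w) $ (2*s) + v $ (2*s+1) * (Vform (2*m) *\<^sub>v w) $ (2*s+1))"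
    by (rule sum_lessThan_pairs)
  also have "\<dots> = (\<Sum>s<m. 0)"
  proof (rule sum.cong[OF refl])
    fix s assume s: "s \<in> {..<m}"
    have a: "2*m - 1 - 2*s = 2*(m-1-s) + 1" "2*m - 1 - (2*s+1) = 2*(m-1-s)" using s by auto
    have b: "w $ (2*(m-1-s)) = w $ (2*(m-1-s)+1)" using Y(2) s unfolding in_pair_span_def by auto
    have c: "v $ (2*s) = v $ (2*s+1)" using Y(1) s unfolding in_pair_span_def by auto
    have "v $ (2*s) * (Vform (2*m) *\<^sub>v w) $ (2*s) + v $ (2*s+1) * (Vform (2*m) *\<^sub>v w) $ (2*s+1)
      = v $ (2*s+1) * w $ (2*(m-1-s)+1) + v $ (2*s+1) * w $ (2*(m-1-s)+1)"
      using Vform_mult_vec_index[OF w, of "2*s"] Vform_mult_vec_index[OF w, of "2*s+1"] s a b c by simp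
    also have "\<dots> = 0" by (rule char_two_add_self[OF two])
    finally show "v $ (2*s) * (Vform (2*m) *\<^sub>v w) $ (2*s) + v $ (2*s+1) * (Vform (2*m) *\<^sub>v w) $ (2*s+1) = 0" .
  qed
  finally show ?thesis by (simp add: bil_def)
qed

(* Vgen m c is the vector x_c of the proof idea; the columns of Vbasis m are x_0, ..., x_(m-1) followed by
   u x_0, ..., u x_(m-1). *)
definition Vgen :: "nat \<Rightarrow> nat \<Rightarrow> 'a::field vec" where "Vgen m c = Vchain (2*m) (2*(m-1-c))"

definition Vbasis :: "nat \<Rightarrow> 'a::field mat" where
  "Vbasis m = mat (2*m) (2*m) (\<lambda>(r,c). if c < m then (Vgen m c :: 'a vec) $ r else (Vu (2*m) *\<^sub>v Vgen m (c-m)) $ r)"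

lemma Vgen_carrier: "(Vgen m c :: 'a::field vec) \<in> carrier_vec (2*m)"
  unfolding Vgen_def by (rule Vchain_carrier)

lemma Vbasis_carrier: "Vbasis m \<in> carrier_mat (2*m) (2*m)" unfolding Vbasis_def by auto

lemma Vbasis_dims[simp]: "dim_row (Vbasis m) = 2*m" "dim_col (Vbasis m) = 2*m" unfolding Vbasis_def by auto

lemma Vbasis_index: "r < 2*m \<Longrightarrow> c < 2*m \<Longrightarrow> (Vbasis m :: 'a::field mat) $$ (r,c) =
   (if c < m then (Vgen m c :: 'a vec) $ r else (Vu (2*m) *\<^sub>v Vgen m (c-m)) $ r)"
  unfolding Vbasis_def by simp

lemma col_Vbasis: assumes c: "c < 2*m"
  shows "col (Vbasis m :: 'a::field mat) c = (if c < m then Vgen m c else Vu (2*m) *\<^sub>v Vgen m (c-m))"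
proof -
  have d1: "dim_vec (Vgen m c' :: 'a vec) = 2*m" for c' using carrier_vecD[OF Vgen_carrier] .
  show ?thesis
  proof (rule eq_vecI)
    fix i assume "i < dim_vec (if c < m then Vgen m c else Vu (2*m) *\<^sub>v Vgen m (c-m) :: 'a vec)"
    then have i: "i < 2*m" using d1 by (auto split: if_splits)
    show "col (Vbasis m :: 'a::field mat) c $ i = (if c < m then Vgen m c else Vu (2*m) *\<^sub>v Vgen m (c-m)) $ i"
      using i c by (simp add: Vbasis_index)
  qed (use d1 c in auto)
qed

lemma Vnil_square_Vgen:
  assumes j: "j < m"
  shows "Vnil (2*m) (Vnil (2*m) (Vgen m j)) = (if 0 < j then Vgen m (j-1) else (0\<^sub>v (2*m) :: 'a::field vec))"
proof -
  have DD: "Vnil (2*m) (Vnil (2*m) (Vgen m j)) = (Vchain (2*m) (2*(m-1-j) + 2) :: 'a vec)"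
    unfolding Vgen_def by (simp add: numeral_2_eq_2)
  show ?thesis
  proof (cases "0 < j")
    case True
    then have "2*(m-1-j) + 2 = 2*(m-1-(j-1))" using j by auto
    then show ?thesis using DD True unfolding Vgen_def by simp
  next
    case False
    then have "2*(m-1-j) + 2 = 2*m" using j by auto
    moreover have "(Vchain (2*m) (2*m) :: 'a vec) = 0\<^sub>v (2*m)"
      using Vchain_zero_below[of _ "2*m" "2*m", where 'a='a] Vchain_carrier[of "2*m" "2*m", where 'a='a]
      by (intro eq_vecI) auto
    ultimately show ?thesis using DD False by simp
  qed
qed

lemma Vu_Vbasis:
  assumes two: "(2::'a::field) = 0"
  shows "(Vu (2*m) :: 'a mat) * Vbasis m = Vbasis m * Ind2 (Jblock m)"
proof (rule eq_matI)
  have I: "Ind2 (Jblock m :: 'a mat) \<in> carrier_mat (2*m) (2*m)" by (rule Ind2_carrier[OF Jblock_carrier])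
  fix i j assume i: "i < dim_row (Vbasis m * Ind2 (Jblock m) :: 'a mat)" and j: "j < dim_col (Vbasis m * Ind2 (Jblock m) :: 'a mat)"
  hence i: "i < 2*m" and j: "j < 2*m" using I by auto
  have L: "((Vu (2*m) :: 'a mat) * Vbasis m) $$ (i,j) = (Vu (2*m) *\<^sub>v col (Vbasis m) j) $ i"
    using i j by simp
  have R: "(Vbasis m * Ind2 (Jblock m) :: 'a mat) $$ (i,j) = (\<Sum>t<2*m. Vbasis m $$ (i,t) * Ind2 (Jblock m) $$ (t,j))"
    by (rule mult_mat_index_sum[OF Vbasis_carrier I i j])
  show "((Vu (2*m) :: 'a mat) * Vbasis m) $$ (i,j) = (Vbasis m * Ind2 (Jblock m) :: 'a mat) $$ (i,j)"
  proof (cases "j < m")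
    case True
    have "(\<Sum>t<2*m. (Vbasis m :: 'a mat) $$ (i,t) * Ind2 (Jblock m) $$ (t,j)) = (\<Sum>t<2*m. if t = m + j then Vbasis m $$ (i,m+j) else 0)"
      by (rule sum.cong[OF refl]) (use True j in \<open>auto simp: Ind2_index[OF Jblock_carrier]\<close>)
    also have "\<dots> = (Vbasis m :: 'a mat) $$ (i,m+j)" using True by (simp add: sum.delta')
    also have "\<dots> = (Vu (2*m) *\<^sub>v Vgen m j) $ i" using True i by (simp add: Vbasis_index)
    finally show ?thesis unfolding L R using col_Vbasis[OF j, where 'a='a] True by simp
  next
    case False
    define j' where "j' = j - m"
    have j': "j' < m" "j = m + j'" using j False unfolding j'_def by auto
    have "(\<Sum>t<2*m. (Vbasis m :: 'a mat) $$ (i,t) * Ind2 (Jblock m) $$ (t,j)) =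
       (\<Sum>t<2*m. (if t = j' then Vbasis m $$ (i,j') else 0) + (if 0 < j' \<and> t = j' - 1 then Vbasis m $$ (i,j'-1) else 0))"
    proof (rule sum.cong[OF refl])
      fix t assume t: "t \<in> {..<2*m}"
      show "(Vbasis m :: 'a mat) $$ (i,t) * Ind2 (Jblock m) $$ (t,j) = (if t = j' then Vbasis m $$ (i,j') else 0) + (if 0 < j' \<and> t = j' - 1 then Vbasis m $$ (i,j'-1) else 0)"
        using t j' j by (auto simp: Ind2_index[OF Jblock_carrier] Jblock_index)
    qed
    also have "\<dots> = Vbasis m $$ (i,j') + (if 0 < j' then Vbasis m $$ (i,j'-1) else 0)"
      using j' by (simp add: sum.distrib sum.delta')
    also have "\<dots> = (Vgen m j' :: 'a vec) $ i + (if 0 < j' then (Vgen m (j'-1) :: 'a vec) $ i else 0)"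
      using j' i by (auto simp: Vbasis_index)
    finally have R': "(Vbasis m * Ind2 (Jblock m) :: 'a mat) $$ (i,j) = (Vgen m j' :: 'a vec) $ i + (if 0 < j' then (Vgen m (j'-1) :: 'a vec) $ i else 0)"
      unfolding R .
    have col: "col (Vbasis m :: 'a mat) j = Vu (2*m) *\<^sub>v Vgen m j'" using col_Vbasis[OF j, where 'a='a] j' by simp
    have DDi: "Vnil (2*m) (Vnil (2*m) (Vgen m j')) $ i = (if 0 < j' then (Vgen m (j'-1) :: 'a vec) $ i else 0)"
      using Vnil_square_Vgen[OF j'(1), where 'a='a] i by simp
    have "((Vu (2*m) :: 'a mat) * Vbasis m) $$ (i,j) = Vnil (2*m) (Vnil (2*m) (Vgen m j')) $ i + (Vgen m j' :: 'a vec) $ i"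
      unfolding L col by (rule Vu_square_char_two[OF two Vgen_carrier i])
    then show ?thesis unfolding R' DDi by (simp add: add.commute)
  qed
qed (auto simp: Ind2_carrier[OF Jblock_carrier] mult_2 Ind2_def Jblock_def)

definition Vchain_mat :: "nat \<Rightarrow> 'a::field mat" where
  "Vchain_mat m = mat (2*m) (2*m) (\<lambda>(r,j). (Vchain (2*m) (2*m-1-j) :: 'a vec) $ r)"

lemma Vchain_mat_injective:
  assumes w: "w \<in> carrier_vec (2*m)" and z: "(Vchain_mat m :: 'a::field mat) *\<^sub>v w = 0\<^sub>v (2*m)"
  shows "w = 0\<^sub>v (2*m)"
proof (rule unitriangular_mat_injective[OF _ _ _ w z])
  show C: "(Vchain_mat m :: 'a mat) \<in> carrier_mat (2*m) (2*m)" unfolding Vchain_mat_def by auto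
  show "upper_triangular (Vchain_mat m :: 'a mat)"
  proof (rule upper_triangularI)
    fix i j assume "j < i" "i < dim_row (Vchain_mat m :: 'a mat)"
    then show "(Vchain_mat m :: 'a mat) $$ (i,j) = 0"
      using Vchain_zero_below[of _ "2*m" "2*m-1-j", where 'a='a] unfolding Vchain_mat_def by auto
  qed
  fix i assume i: "i < 2*m"
  then have "2*m - 1 - (2*m-1-i) = i" by auto
  then show "(Vchain_mat m :: 'a mat) $$ (i,i) = 1"
    using Vchain_leading[of "2*m-1-i" "2*m", where 'a='a] i unfolding Vchain_mat_def by auto
qed

(* Since u x_c = x_c + (u - 1) x_c, a unitriangular change of coordinates turns the columns of Vbasis m
   into the chain vectors (u - 1)^s e_(2m), which are the columns of the unitriangular Vchain_mat m. *)
lemma Vbasis_mult_vec: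
  fixes v :: "'a::field vec"
  assumes v: "v \<in> carrier_vec (2*m)"
  defines "wv \<equiv> vec (2*m) (\<lambda>t. if even t then v $ (m + t div 2) else v $ (t div 2) + v $ (m + t div 2))"
  shows "Vbasis m *\<^sub>v v = Vchain_mat m *\<^sub>v wv"
proof -
  have wv: "wv \<in> carrier_vec (2*m)" unfolding wv_def by auto
  have PC: "(Vchain_mat m :: 'a mat) \<in> carrier_mat (2*m) (2*m)" unfolding Vchain_mat_def by auto
  have x: "Vgen m s = (Vchain (2*m) (2*m-1-(2*s+1)) :: 'a vec)" if s: "s < m" for s
  proof -
    have "2*m-1-(2*s+1) = 2*(m-1-s)" using s by auto
    then show ?thesis unfolding Vgen_def by simp
  qed
  have dx: "Vnil (2*m) (Vgen m s) = (Vchain (2*m) (2*m-1-2*s) :: 'a vec)" if s: "s < m" for s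
  proof -
    have "2*m-1-2*s = Suc (2*(m-1-s))" using s by auto
    then show ?thesis unfolding Vgen_def by simp
  qed
  show ?thesis
  proof (rule eq_vecI)
    fix r assume r: "r < dim_vec (Vchain_mat m *\<^sub>v wv :: 'a vec)"
    then have r: "r < 2*m" using PC by auto
    have "((Vbasis m :: 'a mat) *\<^sub>v v) $ r = (\<Sum>c<m. Vbasis m $$ (r,c) * v $ c) + (\<Sum>c<m. Vbasis m $$ (r,m+c) * v $ (m+c))"
      unfolding mult_mat_vec_index_sum[OF Vbasis_carrier v r] by (rule sum_lessThan_double)
    also have "\<dots> = (\<Sum>s<m. (Vgen m s :: 'a vec) $ r * v $ s + (Vu (2*m) *\<^sub>v Vgen m s) $ r * v $ (m+s))"
      using r by (simp add: Vbasis_index sum.distrib)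
    also have "\<dots> = (\<Sum>s<m. (Vchain_mat m :: 'a mat) $$ (r,2*s) * wv $ (2*s) + Vchain_mat m $$ (r,2*s+1) * wv $ (2*s+1))"
    proof (rule sum.cong[OF refl])
      fix s assume s: "s \<in> {..<m}"
      have "(Vu (2*m) *\<^sub>v Vgen m s) $ r = Vnil (2*m) (Vgen m s) $ r + (Vgen m s :: 'a vec) $ r"
        using Vnil_index[OF Vgen_carrier r, of s, where 'a='a] by simp
      moreover have "wv $ (2*s) = v $ (m+s)" "wv $ (2*s+1) = v $ s + v $ (m+s)"
        using s unfolding wv_def by auto
      moreover have "(Vchain_mat m :: 'a mat) $$ (r,2*s) = Vnil (2*m) (Vgen m s) $ r"
        "(Vchain_mat m :: 'a mat) $$ (r,2*s+1) = (Vgen m s :: 'a vec) $ r"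
        using s r dx x unfolding Vchain_mat_def by auto
      ultimately show "(Vgen m s :: 'a vec) $ r * v $ s + (Vu (2*m) *\<^sub>v Vgen m s) $ r * v $ (m+s) =
         (Vchain_mat m :: 'a mat) $$ (r,2*s) * wv $ (2*s) + Vchain_mat m $$ (r,2*s+1) * wv $ (2*s+1)"
        by (simp add: algebra_simps)
    qed
    also have "\<dots> = ((Vchain_mat m :: 'a mat) *\<^sub>v wv) $ r"
      unfolding mult_mat_vec_index_sum[OF PC wv r] by (rule sum_lessThan_pairs[symmetric])
    finally show "((Vbasis m :: 'a mat) *\<^sub>v v) $ r = ((Vchain_mat m :: 'a mat) *\<^sub>v wv) $ r" .
  qed (use PC in auto)
qed

lemma Vbasis_injective:
  assumes v: "v \<in> carrier_vec (2*m)" and z: "(Vbasis m :: 'a::field mat) *\<^sub>v v = 0\<^sub>v (2*m)"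
  shows "v = 0\<^sub>v (2*m)"
proof -
  define wv where "wv = vec (2*m) (\<lambda>t. if even t then v $ (m + t div 2) else v $ (t div 2) + v $ (m + t div 2))"
  have wv: "wv \<in> carrier_vec (2*m)" unfolding wv_def by auto
  have "wv = 0\<^sub>v (2*m)" using Vchain_mat_injective[OF wv] z Vbasis_mult_vec[OF v] unfolding wv_def by simp
  then have w0: "wv $ t = 0" if "t < 2*m" for t using that by simp
  show ?thesis
  proof (rule eq_vecI)
    fix i assume i: "i < dim_vec (0\<^sub>v (2*m) :: 'a vec)"
    then have i: "i < 2*m" by simp
    show "v $ i = 0\<^sub>v (2*m) $ i"
    proof (cases "i < m")
      case True
      have a: "wv $ (2*i) = 0" "wv $ (2*i+1) = 0" using w0 True by auto
      then show ?thesis using True unfolding wv_def by auto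
    next
      case False
      have a: "wv $ (2*(i-m)) = 0" using w0 False i by auto
      then show ?thesis using False i unfolding wv_def by auto
    qed
  qed (use v in auto)
qed

definition Vgram :: "nat \<Rightarrow> 'a::field mat" where
  "Vgram m = transpose_mat (Vbasis m) * (Vform (2*m) * Vbasis m)"

lemma Vgram_carrier: "Vgram m \<in> carrier_mat (2*m) (2*m)"
  unfolding Vgram_def using Vbasis_carrier Vform_carrier by (intro mult_carrier_mat) auto

lemma Vgram_diagonal_blocks:
  assumes m: "odd m" and two: "(2::'a::field) = 0"
    and a: "a < 2*m" and b: "b < 2*m" and ab: "a < m \<longleftrightarrow> b < m"
  shows "(Vgram m :: 'a mat) $$ (a,b) = 0"
proof -
  have "(Vgram m :: 'a mat) $$ (a,b) = bil (Vform (2*m)) (col (Vbasis m) a) (col (Vbasis m) b)"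
  proof -
    have "col (Vform (2*m) * Vbasis m :: 'a mat) b = Vform (2*m) *\<^sub>v col (Vbasis m) b"
      by (rule col_mult2[OF Vform_carrier Vbasis_carrier b])
    then show ?thesis using a b by (simp add: bil_def Vgram_def)
  qed
  also have "\<dots> = 0"
  proof (cases "a < m")
    case True
    then have bm: "b < m" using ab by simp
    have X: "in_even_span (2*m) (Vgen m c :: 'a vec)" for c unfolding Vgen_def by (rule in_even_span_Vchain[OF m two])
    show ?thesis unfolding col_Vbasis[OF a, where 'a='a] col_Vbasis[OF b, where 'a='a] using True bm
      by (simp add: bil_def[symmetric] even_span_isotropic[OF Vgen_carrier Vgen_carrier X X])
  next
    case False
    then have bm: "\<not> b < m" using ab by simp
    have Y: "in_pair_span (2*m) (Vu (2*m) *\<^sub>v Vgen m c :: 'a vec)" for c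
      by (rule in_pair_span_Vu[OF Vgen_carrier]) (unfold Vgen_def, rule in_even_span_Vchain[OF m two])
    have C: "(Vu (2*m) *\<^sub>v Vgen m c :: 'a vec) \<in> carrier_vec (2*m)" for c
      by (rule mult_mat_vec_carrier[OF Vu_carrier Vgen_carrier])
    show ?thesis unfolding col_Vbasis[OF a, where 'a='a] col_Vbasis[OF b, where 'a='a] using False bm
      by (simp add: bil_def[symmetric] pair_span_isotropic[OF two C C Y Y])
  qed
  finally show ?thesis .
qed

lemma kron_Vu_Vbasis:
  assumes "(2::'a::field) = 0"
  shows "kron (Vu (2*l)) (Vu (2*k)) * kron (Vbasis l) (Vbasis k)
    = kron (Vbasis l) (Vbasis k) * (kron (Ind2 (Jblock l)) (Ind2 (Jblock k)) :: 'a mat)"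
  by (rule kron_intertwiner[OF Vu_carrier Vbasis_carrier Ind2_carrier[OF Jblock_carrier]
        Vu_carrier Vbasis_carrier Ind2_carrier[OF Jblock_carrier] Vu_Vbasis[OF assms] Vu_Vbasis[OF assms]])

lemma kron_Vbasis_left_invertible:
  "\<exists>Ti \<in> carrier_mat (2*l*(2*k)) (2*l*(2*k)). Ti * kron (Vbasis l) (Vbasis k) = (1\<^sub>m (2*l*(2*k)) :: 'a::field mat)"
proof -
  obtain Pi :: "'a mat" where Pi: "Pi \<in> carrier_mat (2*l) (2*l)" "Pi * Vbasis l = 1\<^sub>m (2*l)"
    using injective_mat_invertible[OF Vbasis_carrier Vbasis_injective] by blast
  obtain Qi :: "'a mat" where Qi: "Qi \<in> carrier_mat (2*k) (2*k)" "Qi * Vbasis k = 1\<^sub>m (2*k)"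
    using injective_mat_invertible[OF Vbasis_carrier Vbasis_injective] by blast
  show ?thesis
    using kron_carrier[OF Pi(1) Qi(1)] kron_left_inverse[OF Pi(1) Vbasis_carrier Pi(2) Qi(1) Vbasis_carrier Qi(2)]
    by blast
qed

section \<open>Tensor products of induced modules\<close>

(* An index i < 2l * 2k of Ind2 A \<otimes> Ind2 B stands for the pair (i div 2k, i mod 2k), whose components lie in
   the first (1 \<otimes> -) or second (u \<otimes> -) half according as they are < l, resp. < k. same_half i says that
   both lie in the same half. same_half_pos j is the index at which the j-th basis vector of
   Ind2 (A \<otimes> B) sits, and same_half_coord inverts it. *)
definition same_half_pos :: "nat \<Rightarrow> nat \<Rightarrow> nat \<Rightarrow> nat" where
  "same_half_pos l k j = (if j < l*k then (j div k)*(2*k) + j mod k else (l + (j - l*k) div k)*(2*k) + (k + (j - l*k) mod k))"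
definition same_half :: "nat \<Rightarrow> nat \<Rightarrow> nat \<Rightarrow> bool" where
  "same_half l k i \<longleftrightarrow> (i div (2*k) < l \<longleftrightarrow> i mod (2*k) < k)"
definition same_half_coord :: "nat \<Rightarrow> nat \<Rightarrow> nat \<Rightarrow> nat" where
  "same_half_coord l k i = (if i div (2*k) < l then (i div (2*k))*k + i mod (2*k) else l*k + ((i div (2*k) - l)*k + (i mod (2*k) - k)))"

lemma same_half_pos_low:
  assumes k: "0 < k" and j: "j < l*k"
  shows "same_half_pos l k j div (2*k) = j div k" "same_half_pos l k j mod (2*k) = j mod k"
proof -
  have "j mod k < k" using k by simp
  then have "j mod k < 2*k" by linarith
  then show "same_half_pos l k j div (2*k) = j div k" "same_half_pos l k j mod (2*k) = j mod k"
    using mult_add_div_mod[of "j mod k" "2*k" "j div k"] j unfolding same_half_pos_def by auto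
qed

lemma same_half_pos_high:
  assumes k: "0 < k" and j: "\<not> j < l*k"
  shows "same_half_pos l k j div (2*k) = l + (j - l*k) div k" "same_half_pos l k j mod (2*k) = k + (j - l*k) mod k"
proof -
  have "k + (j - l*k) mod k < 2*k" using k by simp
  then show "same_half_pos l k j div (2*k) = l + (j - l*k) div k" "same_half_pos l k j mod (2*k) = k + (j - l*k) mod k"
    using mult_add_div_mod[of "k + (j - l*k) mod k" "2*k" "l + (j - l*k) div k"] j unfolding same_half_pos_def by auto
qed

lemma same_half_pos_props:
  assumes k: "0 < k" and j: "j < 2*(l*k)"
  shows "same_half_pos l k j < 2*l*(2*k) \<and> same_half l k (same_half_pos l k j) \<and> same_half_coord l k (same_half_pos l k j) = j"
proof (cases "j < l*k")
  case True
  have jd: "j div k < l" using True k by (simp add: less_mult_imp_div_less)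
  have jm: "j mod k < k" using k by simp
  have b: "same_half_pos l k j < 2*l*(2*k)"
  proof -
    have "same_half_pos l k j = (j div k)*(2*k) + j mod k" using True unfolding same_half_pos_def by simp
    also have "\<dots> < (2*l)*(2*k)" using jd jm mult_add_less_mult[of "j div k" "2*l" "j mod k" "2*k"] by auto
    finally show ?thesis by simp
  qed
  have "same_half_coord l k (same_half_pos l k j) = (j div k)*k + j mod k" unfolding same_half_coord_def same_half_pos_low[OF k True] using jd by simp
  then show ?thesis using b jd jm k unfolding same_half_def same_half_pos_low[OF k True] by simp
next
  case False
  have j1: "j - l*k < l*k" using j False by auto
  have jd: "(j - l*k) div k < l" using j1 k by (simp add: less_mult_imp_div_less)
  have jm: "(j - l*k) mod k < k" using k by simp
  have b: "same_half_pos l k j < 2*l*(2*k)"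
  proof -
    have "same_half_pos l k j = (l + (j - l*k) div k)*(2*k) + (k + (j - l*k) mod k)" using False unfolding same_half_pos_def by simp
    also have "\<dots> < (2*l)*(2*k)" using jd jm mult_add_less_mult[of "l + (j - l*k) div k" "2*l" "k + (j - l*k) mod k" "2*k"] by auto
    finally show ?thesis by simp
  qed
  have "same_half_coord l k (same_half_pos l k j) = l*k + (((j - l*k) div k)*k + (j - l*k) mod k)" unfolding same_half_coord_def same_half_pos_high[OF k False] using jd by simp
  also have "\<dots> = j" using False by simp
  finally show ?thesis using b jd jm k unfolding same_half_def same_half_pos_high[OF k False] by simp
qed

lemma same_half_coord_props:
  assumes k: "0 < k" and i: "i < 2*l*(2*k)" and S: "same_half l k i"
  shows "same_half_coord l k i < 2*(l*k) \<and> same_half_pos l k (same_half_coord l k i) = i"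
proof (cases "i div (2*k) < l")
  case True
  then have b: "i mod (2*k) < k" using S unfolding same_half_def by simp
  have t: "same_half_coord l k i = (i div (2*k))*k + i mod (2*k)" using True unfolding same_half_coord_def by simp
  have tl: "same_half_coord l k i < l*k" unfolding t using mult_add_less_mult[OF True b] .
  have "same_half_coord l k i div k = i div (2*k)" "same_half_coord l k i mod k = i mod (2*k)" unfolding t using mult_add_div_mod[OF b] by auto
  then have "same_half_pos l k (same_half_coord l k i) = (i div (2*k))*(2*k) + i mod (2*k)" using tl unfolding same_half_pos_def by simp
  also have "\<dots> = i" by (rule div_mult_mod_eq)
  finally show ?thesis using tl by simp
next
  case False
  then have b: "\<not> i mod (2*k) < k" using S unfolding same_half_def by simp
  have b2: "i mod (2*k) - k < k" using k by (simp add: less_diff_conv2 b not_less[symmetric] mult_2[symmetric] del: mult_2)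
  have a2: "i div (2*k) < 2*l" using i k by (simp add: less_mult_imp_div_less mult.assoc)
  have a3: "i div (2*k) - l < l" using a2 False by auto
  have t: "same_half_coord l k i = l*k + ((i div (2*k) - l)*k + (i mod (2*k) - k))" using False unfolding same_half_coord_def by simp
  have tl: "(i div (2*k) - l)*k + (i mod (2*k) - k) < l*k" using mult_add_less_mult[OF a3 b2] .
  have nt: "\<not> same_half_coord l k i < l*k" unfolding t by simp
  have e: "same_half_coord l k i - l*k = (i div (2*k) - l)*k + (i mod (2*k) - k)" unfolding t by simp
  have "same_half_pos l k (same_half_coord l k i) = (l + (i div (2*k) - l))*(2*k) + (k + (i mod (2*k) - k))"
    using nt mult_add_div_mod[OF b2, of "i div (2*k) - l"] unfolding same_half_pos_def e by simp
  also have "\<dots> = (i div (2*k))*(2*k) + i mod (2*k)" using False b by simp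
  also have "\<dots> = i" by (rule div_mult_mod_eq)
  finally show ?thesis using tl unfolding t by (simp add: mult.commute)
qed

definition same_half_embed :: "nat \<Rightarrow> nat \<Rightarrow> 'a::field mat" where
  "same_half_embed l k = mat (2*l*(2*k)) (2*(l*k)) (\<lambda>(i,j). if i = same_half_pos l k j then 1 else 0)"

lemma same_half_embed_carrier: "same_half_embed l k \<in> carrier_mat (2*l*(2*k)) (2*(l*k))" unfolding same_half_embed_def by auto

lemma same_half_embed_dims[simp]: "dim_row (same_half_embed l k) = 2*l*(2*k)" "dim_col (same_half_embed l k) = 2*(l*k)" unfolding same_half_embed_def by auto

lemma same_half_pos_iff:
  assumes k: "0 < k" and i: "i < 2*l*(2*k)" and t: "t < 2*(l*k)"
  shows "(i = same_half_pos l k t) \<longleftrightarrow> (same_half l k i \<and> t = same_half_coord l k i)"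
  using same_half_pos_props[OF k t] same_half_coord_props[OF k i] by auto

lemma same_half_embed_mult_vec:
  assumes k: "0 < k" and a: "a \<in> carrier_vec (2*(l*k))" and i: "i < 2*l*(2*k)"
  shows "((same_half_embed l k :: 'a::field mat) *\<^sub>v a) $ i = (if same_half l k i then a $ same_half_coord l k i else 0)"
proof -
  have "((same_half_embed l k :: 'a mat) *\<^sub>v a) $ i = (\<Sum>t<2*(l*k). (if t = same_half_coord l k i \<and> same_half l k i then a $ t else 0))"
    unfolding mult_mat_vec_index_sum[OF same_half_embed_carrier a i]
    by (rule sum.cong[OF refl]) (use same_half_pos_iff[OF k i] i in \<open>auto simp: same_half_embed_def\<close>)
  also have "\<dots> = (if same_half l k i then a $ same_half_coord l k i else 0)"
    using same_half_coord_props[OF k i] by (cases "same_half l k i") (auto simp: sum.delta')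
  finally show ?thesis .
qed

lemma same_half_embed_at_pos:
  assumes k: "0 < k" and a: "a \<in> carrier_vec (2*(l*k))" and j: "j < 2*(l*k)"
  shows "((same_half_embed l k :: 'a::field mat) *\<^sub>v a) $ (same_half_pos l k j) = a $ j"
  using same_half_embed_mult_vec[OF k a] same_half_pos_props[OF k j] by auto

lemma same_half_embed_support:
  assumes k: "0 < k" and a: "a \<in> carrier_vec (2*(l*k))" and i: "i < 2*l*(2*k)" and n: "\<not> same_half l k i"
  shows "((same_half_embed l k :: 'a::field mat) *\<^sub>v a) $ i = 0"
  using same_half_embed_mult_vec[OF k a i] n by simp

lemma same_half_embed_injective:
  assumes k: "0 < k" and a: "a \<in> carrier_vec (2*(l*k))" and z: "((same_half_embed l k :: 'a::field mat) *\<^sub>v a) = 0\<^sub>v (2*l*(2*k))"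
  shows "a = 0\<^sub>v (2*(l*k))"
proof (rule eq_vecI)
  fix j assume "j < dim_vec (0\<^sub>v (2*(l*k)) :: 'a vec)"
  then have j: "j < 2*(l*k)" by simp
  have "a $ j = ((same_half_embed l k :: 'a mat) *\<^sub>v a) $ (same_half_pos l k j)" using same_half_embed_at_pos[OF k a j] by simp
  also have "\<dots> = 0" unfolding z using same_half_pos_props[OF k j] by simp
  finally show "a $ j = 0\<^sub>v (2*(l*k)) $ j" using j by simp
qed (use a in auto)

lemma mult_same_half_embed_index:
  fixes X :: "'a::field mat"
  assumes X: "X \<in> carrier_mat n (2*l*(2*k))" and k: "0 < k" and i: "i < n" and j: "j < 2*(l*k)"
  shows "(X * same_half_embed l k) $$ (i,j) = X $$ (i, same_half_pos l k j)"
proof -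
  have pos: "same_half_pos l k j < 2*l*(2*k)" using same_half_pos_props[OF k j] by simp
  have "col (same_half_embed l k :: 'a mat) j = unit_vec (2*l*(2*k)) (same_half_pos l k j)"
    by (rule eq_vecI) (use j pos in \<open>auto simp: same_half_embed_def\<close>)
  then show ?thesis using X i j pos by simp
qed

lemma same_half_embed_mult_index:
  fixes Y :: "'a::field mat"
  assumes Y: "Y \<in> carrier_mat (2*(l*k)) n" and k: "0 < k" and i: "i < 2*l*(2*k)" and j: "j < n"
  shows "(same_half_embed l k * Y) $$ (i,j) = (if same_half l k i then Y $$ (same_half_coord l k i, j) else 0)"
proof -
  have "(same_half_embed l k * Y) $$ (i,j) = (same_half_embed l k *\<^sub>v col Y j) $ i"
    using Y i j same_half_embed_carrier[of l k] by simp
  also have "\<dots> = (if same_half l k i then col Y j $ same_half_coord l k i else 0)"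
    by (rule same_half_embed_mult_vec[OF k _ i]) (use Y j in auto)
  finally show ?thesis using same_half_coord_props[OF k i] Y j by auto
qed

lemma same_half_coord_cases:
  assumes "i < 2*l*(2*k)" and "0 < k"
  shows "i div (2*k) < 2*l" "same_half l k i \<longleftrightarrow> (i div (2*k) < l \<longleftrightarrow> i mod (2*k) < k)"
    "i div (2*k) < l \<Longrightarrow> same_half_coord l k i = (i div (2*k))*k + i mod (2*k)"
    "\<not> i div (2*k) < l \<Longrightarrow> same_half_coord l k i = l*k + ((i div (2*k) - l)*k + (i mod (2*k) - k))"
  using assms by (auto simp: same_half_def same_half_coord_def less_mult_imp_div_less mult.assoc)

lemma kron_Ind2_at_same_half_pos_low:
  fixes A B :: "'a::field mat"
  assumes A: "A \<in> carrier_mat l l" and B: "B \<in> carrier_mat k k" and k: "0 < k"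
    and i: "i < 2*l*(2*k)" and j: "j < l*k"
  shows "kron (Ind2 A) (Ind2 B) $$ (i, same_half_pos l k j)
    = (if same_half l k i then Ind2 (kron A B) $$ (same_half_coord l k i, j) else 0)"
proof -
  define a b c e where "a = i div (2*k)" and "b = i mod (2*k)" and "c = j div k" and "e = j mod k"
  note coord = same_half_coord_cases[OF i k, folded a_def b_def]
  have b: "b < 2*k" and c: "c < l" and e: "e < k" and je: "j = c*k + e"
    using j k unfolding b_def c_def e_def by (auto simp: less_mult_imp_div_less)
  have pos: "same_half_pos l k j < 2*l*(2*k)" using same_half_pos_props[OF k] j by simp
  have M: "kron (Ind2 A) (Ind2 B) $$ (i, same_half_pos l k j)
      = (if \<not> a < l \<and> \<not> b < k \<and> a - l = c \<and> b - k = e then 1 else 0)"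
    using kron_index[OF Ind2_carrier[OF A] Ind2_carrier[OF B] i pos] coord(1) b c e
    unfolding same_half_pos_low[OF k j] a_def[symmetric] b_def[symmetric] c_def[symmetric] e_def[symmetric]
    by (auto simp: Ind2_index[OF A] Ind2_index[OF B] mult_2)
  show ?thesis
  proof (cases "a < l")
    case True
    then have "b < k \<Longrightarrow> a*k+b < l*k" using mult_add_less_mult[of a l b k] by simp
    then show ?thesis unfolding M coord(2) using coord(3) True j b
      by (auto simp: Ind2_index[OF kron_carrier[OF A B]])
  next
    case aF: False
    show ?thesis
    proof (cases "b < k")
      case False
      have "(a - l)*k + (b - k) < l*k" using mult_add_less_mult[of "a-l" l "b-k" k] coord(1) aF b False by simp
      moreover have "b - k < k" using b by simp
      then have "(a - l)*k + (b - k) = c*k + e \<longleftrightarrow> a - l = c \<and> b - k = e"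
        using mult_add_div_mod[of "b-k" k "a-l"] mult_add_div_mod[OF e, of c] by metis
      ultimately show ?thesis unfolding M coord(2) using coord(4)[OF aF] aF False j je
        by (auto simp: Ind2_index[OF kron_carrier[OF A B]])
    qed (use M coord(2) aF in simp)
  qed
qed

lemma kron_Ind2_at_same_half_pos_high:
  fixes A B :: "'a::field mat"
  assumes A: "A \<in> carrier_mat l l" and B: "B \<in> carrier_mat k k" and k: "0 < k"
    and i: "i < 2*l*(2*k)" and j: "j < 2*(l*k)" "\<not> j < l*k"
  shows "kron (Ind2 A) (Ind2 B) $$ (i, same_half_pos l k j)
    = (if same_half l k i then Ind2 (kron A B) $$ (same_half_coord l k i, j) else 0)"
proof -
  define a b c e where "a = i div (2*k)" and "b = i mod (2*k)" and "c = (j - l*k) div k" and "e = (j - l*k) mod k"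
  note coord = same_half_coord_cases[OF i k, folded a_def b_def]
  have j1: "j - l*k < l*k" using j by auto
  have b: "b < 2*k" and c: "c < l" and e: "e < k" and je: "j - l*k = c*k + e"
    using j1 k unfolding b_def c_def e_def by (auto simp: less_mult_imp_div_less)
  have pos: "same_half_pos l k j < 2*l*(2*k)" using same_half_pos_props[OF k j(1)] by simp
  have M: "kron (Ind2 A) (Ind2 B) $$ (i, same_half_pos l k j) = (if a < l \<and> b < k then A $$ (a,c) * B $$ (b,e) else 0)"
    using kron_index[OF Ind2_carrier[OF A] Ind2_carrier[OF B] i pos] coord(1) b c e
    unfolding same_half_pos_high[OF k j(2)] a_def[symmetric] b_def[symmetric] c_def[symmetric] e_def[symmetric]
    by (auto simp: Ind2_index[OF A] Ind2_index[OF B] mult_2)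
  show ?thesis
  proof (cases "a < l \<and> b < k")
    case True
    have tl: "same_half_coord l k i < l*k" using coord(3) True mult_add_less_mult[of a l b k] by auto
    have "Ind2 (kron A B) $$ (same_half_coord l k i, j) = kron A B $$ (same_half_coord l k i, j - l*k)"
      using tl j by (simp add: Ind2_index[OF kron_carrier[OF A B]])
    also have "\<dots> = A $$ (a,c) * B $$ (b,e)"
      using kron_index[OF A B tl j1] coord(3) True mult_add_div_mod[of b k a] je mult_add_div_mod[OF e, of c] by auto
    finally show ?thesis unfolding M coord(2) using True by simp
  next
    case nF: False
    show ?thesis
    proof (cases "same_half l k i")
      case True
      then have aF: "\<not> a < l" "\<not> b < k" using nF coord(2) by auto
      have "same_half_coord l k i < 2*(l*k)" using same_half_coord_props[OF k i True] by simp
      moreover have "\<not> same_half_coord l k i < l*k" using coord(4)[OF aF(1)] by simp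
      ultimately have "Ind2 (kron A B) $$ (same_half_coord l k i, j) = 0"
        using j by (simp add: Ind2_index[OF kron_carrier[OF A B]])
      then show ?thesis unfolding M using True aF by simp
    qed (use nF M in auto)
  qed
qed

lemma kron_Ind2_same_half_embed:
  fixes A B :: "'a::field mat"
  assumes A: "A \<in> carrier_mat l l" and B: "B \<in> carrier_mat k k" and k: "0 < k"
  shows "kron (Ind2 A) (Ind2 B) * same_half_embed l k = same_half_embed l k * Ind2 (kron A B)"
proof (rule eq_matI)
  have M: "kron (Ind2 A) (Ind2 B) \<in> carrier_mat (2*l*(2*k)) (2*l*(2*k))"
    by (rule kron_carrier[OF Ind2_carrier[OF A] Ind2_carrier[OF B]])
  have C: "Ind2 (kron A B) \<in> carrier_mat (2*(l*k)) (2*(l*k))" by (rule Ind2_carrier[OF kron_carrier[OF A B]])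
  fix i j assume "i < dim_row (same_half_embed l k * Ind2 (kron A B))" "j < dim_col (same_half_embed l k * Ind2 (kron A B))"
  then have i: "i < 2*l*(2*k)" and j: "j < 2*(l*k)" using C same_half_embed_carrier[of l k] by auto
  show "(kron (Ind2 A) (Ind2 B) * same_half_embed l k) $$ (i,j) = (same_half_embed l k * Ind2 (kron A B)) $$ (i,j)"
    unfolding mult_same_half_embed_index[OF M k i j] same_half_embed_mult_index[OF C k i j]
    using kron_Ind2_at_same_half_pos_low[OF A B k i] kron_Ind2_at_same_half_pos_high[OF A B k i j]
    by (cases "j < l*k") auto
qed (use A B in \<open>auto simp: same_half_embed_def Ind2_def kron_def algebra_simps\<close>)

(* p = True means that X is block diagonal with respect to the two halves, p = False that it is block
   anti-diagonal; likewise q for Y. *)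
lemma kron_index_across_halves:
  fixes X Y :: "'a::field mat"
  assumes X: "X \<in> carrier_mat (2*l) (2*l)" and Y: "Y \<in> carrier_mat (2*k) (2*k)" and k: "0 < k"
    and X0: "\<And>a b. a < 2*l \<Longrightarrow> b < 2*l \<Longrightarrow> (a < l \<longleftrightarrow> b < l) \<noteq> p \<Longrightarrow> X $$ (a,b) = 0"
    and Y0: "\<And>a b. a < 2*k \<Longrightarrow> b < 2*k \<Longrightarrow> (a < k \<longleftrightarrow> b < k) \<noteq> q \<Longrightarrow> Y $$ (a,b) = 0"
    and i: "i < 2*l*(2*k)" and j: "j < 2*l*(2*k)"
    and ij: "(same_half l k i \<longleftrightarrow> same_half l k j) \<noteq> (p \<longleftrightarrow> q)"
  shows "kron X Y $$ (i,j) = 0"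
proof -
  have "i div (2*k) < 2*l" "j div (2*k) < 2*l" using i j k by (auto simp: less_mult_imp_div_less mult.assoc)
  moreover have "i mod (2*k) < 2*k" "j mod (2*k) < 2*k" using k by auto
  ultimately have "X $$ (i div (2*k), j div (2*k)) = 0 \<or> Y $$ (i mod (2*k), j mod (2*k)) = 0"
    using X0 Y0 ij unfolding same_half_def by blast
  then show ?thesis using kron_index[OF X Y i j] by auto
qed

lemma kron_one_Ind2_leaves_same_half:
  fixes B :: "'a::field mat"
  assumes B: "B \<in> carrier_mat k k" and k: "0 < k" and z: "z \<in> carrier_vec (2*l*(2*k))"
    and S: "\<And>t. t < 2*l*(2*k) \<Longrightarrow> \<not> same_half l k t \<Longrightarrow> z $ t = 0"
    and i: "i < 2*l*(2*k)" and iS: "same_half l k i"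
  shows "(kron (1\<^sub>m (2*l)) (Ind2 B) *\<^sub>v z) $ i = 0"
proof (rule mult_mat_vec_index_zero[OF kron_carrier[OF one_carrier_mat Ind2_carrier[OF B]] z i])
  fix t assume t: "t < 2*l*(2*k)"
  have "kron (1\<^sub>m (2*l)) (Ind2 B) $$ (i,t) = 0" if "same_half l k t"
    by (rule kron_index_across_halves[OF one_carrier_mat Ind2_carrier[OF B] k _ _ i t, where p = True and q = False])
      (use iS that in \<open>auto simp: Ind2_index[OF B]\<close>)
  then show "kron (1\<^sub>m (2*l)) (Ind2 B) $$ (i,t) = 0 \<or> z $ t = 0" using S t by blast
qed

lemma bil_kron_off_diagonal:
  fixes Phi1 Phi2 :: "'a::field mat"
  assumes k: "0 < k" and P1: "Phi1 \<in> carrier_mat (2*l) (2*l)" and P2: "Phi2 \<in> carrier_mat (2*k) (2*k)"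
    and Z1: "\<And>a b. a < 2*l \<Longrightarrow> b < 2*l \<Longrightarrow> (a < l \<longleftrightarrow> b < l) \<Longrightarrow> Phi1 $$ (a,b) = 0"
    and Z2: "\<And>a b. a < 2*k \<Longrightarrow> b < 2*k \<Longrightarrow> (a < k \<longleftrightarrow> b < k) \<Longrightarrow> Phi2 $$ (a,b) = 0"
    and z: "z \<in> carrier_vec (2*l*(2*k))" and z': "z' \<in> carrier_vec (2*l*(2*k))"
    and S: "\<And>t. t < 2*l*(2*k) \<Longrightarrow> \<not> same_half l k t \<Longrightarrow> z $ t = 0"
    and S': "\<And>t. t < 2*l*(2*k) \<Longrightarrow> same_half l k t \<Longrightarrow> z' $ t = 0"
  shows "bil (kron Phi1 Phi2) z z' = 0"
  unfolding bil_def
proof (rule scalar_prod_zero[OF mult_mat_vec_carrier[OF kron_carrier[OF P1 P2] z']])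
  fix i assume i: "i < 2*l*(2*k)"
  have "(kron Phi1 Phi2 *\<^sub>v z') $ i = 0" if iS: "same_half l k i"
  proof (rule mult_mat_vec_index_zero[OF kron_carrier[OF P1 P2] z' i])
    fix j assume j: "j < 2*l*(2*k)"
    have "kron Phi1 Phi2 $$ (i,j) = 0" if "\<not> same_half l k j"
      by (rule kron_index_across_halves[OF P1 P2 k _ _ i j, where p = False and q = False])
        (use Z1 Z2 iS that in auto)
    then show "kron Phi1 Phi2 $$ (i,j) = 0 \<or> z' $ j = 0" using S' j by blast
  qed
  then show "z $ i = 0 \<or> (kron Phi1 Phi2 *\<^sub>v z') $ i = 0" using S i by blast
qed

(* kron (1\<^sub>m (2*l)) (Ind2 B) is u acting on the second factor only. *)
lemma kron_Ind2_commute_kron_one_Ind2: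
  fixes A B :: "'a::field mat"
  assumes A: "A \<in> carrier_mat l l" and B: "B \<in> carrier_mat k k"
  shows "kron (Ind2 A) (Ind2 B) * kron (1\<^sub>m (2*l)) (Ind2 B) = kron (1\<^sub>m (2*l)) (Ind2 B) * kron (Ind2 A) (Ind2 B)"
  using Ind2_carrier[OF A] Ind2_carrier[OF B]
  by (simp add: kron_mult[of _ "2*l" "2*l" _ "2*k" "2*k" _ "2*l" _ "2*k"])

lemma kron_Ind2_swapped_embed:
  fixes A B :: "'a::field mat"
  assumes A: "A \<in> carrier_mat l l" and B: "B \<in> carrier_mat k k" and k: "0 < k"
  shows "kron (Ind2 A) (Ind2 B) * (kron (1\<^sub>m (2*l)) (Ind2 B) * same_half_embed l k)
    = (kron (1\<^sub>m (2*l)) (Ind2 B) * same_half_embed l k) * Ind2 (kron A B)"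
  by (rule intertwiner_mult[OF kron_carrier[OF Ind2_carrier[OF A] Ind2_carrier[OF B]]
        kron_carrier[OF one_carrier_mat Ind2_carrier[OF B]] kron_carrier[OF Ind2_carrier[OF A] Ind2_carrier[OF B]]
        same_half_embed_carrier Ind2_carrier[OF kron_carrier[OF A B]]
        kron_Ind2_commute_kron_one_Ind2[OF A B] kron_Ind2_same_half_embed[OF A B k]])

lemma same_half_embed_independent:
  fixes B :: "'a::field mat"
  assumes B: "B \<in> carrier_mat k k" and k: "0 < k"
    and B_inj: "\<And>y. y \<in> carrier_vec k \<Longrightarrow> B *\<^sub>v y = 0\<^sub>v k \<Longrightarrow> y = 0\<^sub>v k"
    and a: "a \<in> carrier_vec (2*(l*k))" and b: "b \<in> carrier_vec (2*(l*k))"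
    and z: "same_half_embed l k *\<^sub>v a + (kron (1\<^sub>m (2*l)) (Ind2 B) * same_half_embed l k) *\<^sub>v b
      = 0\<^sub>v (2*l*(2*k))"
  shows "a = 0\<^sub>v (2*(l*k)) \<and> b = 0\<^sub>v (2*(l*k))"
proof -
  let ?E = "same_half_embed l k :: 'a mat" and ?K = "kron (1\<^sub>m (2*l)) (Ind2 B)"
  have E: "?E \<in> carrier_mat (2*l*(2*k)) (2*(l*k))" by (rule same_half_embed_carrier)
  have K: "?K \<in> carrier_mat (2*l*(2*k)) (2*l*(2*k))" by (rule kron_carrier[OF one_carrier_mat Ind2_carrier[OF B]])
  have Eb: "?E *\<^sub>v b \<in> carrier_vec (2*l*(2*k))" using E b by simp
  have KEb: "(?K * ?E) *\<^sub>v b = ?K *\<^sub>v (?E *\<^sub>v b)" by (rule assoc_mult_mat_vec[OF K E b])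
  have KEb_vanishes: "(?K *\<^sub>v (?E *\<^sub>v b)) $ t = 0" if "t < 2*l*(2*k)" "same_half l k t" for t
    by (rule kron_one_Ind2_leaves_same_half[OF B k Eb _ that])
      (use same_half_embed_support[OF k b] in auto)
  have a0: "a = 0\<^sub>v (2*(l*k))"
  proof (rule eq_vecI)
    fix j assume "j < dim_vec (0\<^sub>v (2*(l*k)) :: 'a vec)"
    then have j: "j < 2*(l*k)" by simp
    have pos: "same_half_pos l k j < 2*l*(2*k)" "same_half l k (same_half_pos l k j)"
      using same_half_pos_props[OF k j] by auto
    have "0 = (?E *\<^sub>v a + ?K *\<^sub>v (?E *\<^sub>v b)) $ same_half_pos l k j"
      using z pos KEb by simp
    also have "\<dots> = a $ j" using same_half_embed_at_pos[OF k a j] KEb_vanishes[OF pos] pos K Eb by simp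
    finally show "a $ j = 0\<^sub>v (2*(l*k)) $ j" using j by simp
  qed (use a in simp)
  obtain R where R: "R \<in> carrier_mat (2*k) (2*k)" "R * Ind2 B = 1\<^sub>m (2*k)"
    using injective_mat_invertible[OF Ind2_carrier[OF B] Ind2_injective[OF B B_inj]] by blast
  have "kron (1\<^sub>m (2*l)) R * ?K = 1\<^sub>m (2*l*(2*k))"
    by (rule kron_left_inverse[OF one_carrier_mat one_carrier_mat _ R(1) Ind2_carrier[OF B] R(2)]) simp
  moreover have "?K *\<^sub>v (?E *\<^sub>v b) = 0\<^sub>v (2*l*(2*k))"
    using z KEb a0 mult_mat_vec_zero[OF E] K Eb by simp
  ultimately have "?E *\<^sub>v b = 0\<^sub>v (2*l*(2*k))"
    using left_invertible_injective[OF kron_carrier[OF one_carrier_mat R(1)] K _ Eb] by simp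
  then show ?thesis using a0 same_half_embed_injective[OF k b] by simp
qed

lemma same_half_embed_orthogonal:
  fixes B Phi1 Phi2 :: "'a::field mat"
  assumes B: "B \<in> carrier_mat k k" and k: "0 < k"
    and P1: "Phi1 \<in> carrier_mat (2*l) (2*l)" and P2: "Phi2 \<in> carrier_mat (2*k) (2*k)"
    and Z1: "\<And>a b. a < 2*l \<Longrightarrow> b < 2*l \<Longrightarrow> (a < l \<longleftrightarrow> b < l) \<Longrightarrow> Phi1 $$ (a,b) = 0"
    and Z2: "\<And>a b. a < 2*k \<Longrightarrow> b < 2*k \<Longrightarrow> (a < k \<longleftrightarrow> b < k) \<Longrightarrow> Phi2 $$ (a,b) = 0"
    and a: "a \<in> carrier_vec (2*(l*k))" and b: "b \<in> carrier_vec (2*(l*k))"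
  shows "bil (kron Phi1 Phi2) (same_half_embed l k *\<^sub>v a)
    ((kron (1\<^sub>m (2*l)) (Ind2 B) * same_half_embed l k) *\<^sub>v b) = 0"
proof -
  let ?E = "same_half_embed l k :: 'a mat" and ?K = "kron (1\<^sub>m (2*l)) (Ind2 B)"
  have E: "?E \<in> carrier_mat (2*l*(2*k)) (2*(l*k))" by (rule same_half_embed_carrier)
  have K: "?K \<in> carrier_mat (2*l*(2*k)) (2*l*(2*k))" by (rule kron_carrier[OF one_carrier_mat Ind2_carrier[OF B]])
  have Eb: "?E *\<^sub>v b \<in> carrier_vec (2*l*(2*k))" using E b by simp
  have "bil (kron Phi1 Phi2) (?E *\<^sub>v a) (?K *\<^sub>v (?E *\<^sub>v b)) = 0"
  proof (rule bil_kron_off_diagonal[OF k P1 P2 Z1 Z2])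
    show "?E *\<^sub>v a \<in> carrier_vec (2*l*(2*k))" "?K *\<^sub>v (?E *\<^sub>v b) \<in> carrier_vec (2*l*(2*k))"
      using E K a Eb by auto
    show "(?E *\<^sub>v a) $ t = 0" if "t < 2*l*(2*k)" "\<not> same_half l k t" for t
      using same_half_embed_support[OF k a that] .
    show "(?K *\<^sub>v (?E *\<^sub>v b)) $ t = 0" if "t < 2*l*(2*k)" "same_half l k t" for t
      by (rule kron_one_Ind2_leaves_same_half[OF B k Eb _ that])
        (use same_half_embed_support[OF k b] in auto)
  qed
  then show ?thesis using assoc_mult_mat_vec[OF K E b] by simp
qed

section \<open>The decomposition of V(2l) \<otimes> V(2k)\<close>

lemma kron_V_orthogonal_intertwiners:
  fixes l k :: nat
  assumes two: "(2::'a::field) = 0" and l: "odd l" and k: "odd k"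
  defines "G1 \<equiv> kron (Vbasis l) (Vbasis k) * (same_half_embed l k :: 'a mat)"
    and "G2 \<equiv> kron (Vbasis l) (Vbasis k) * (kron (1\<^sub>m (2*l)) (Ind2 (Jblock k)) * (same_half_embed l k :: 'a mat))"
  shows "G1 \<in> carrier_mat (2*l*(2*k)) (2*(l*k))" "G2 \<in> carrier_mat (2*l*(2*k)) (2*(l*k))"
    and "kron (Vu (2*l)) (Vu (2*k)) * G1 = G1 * Ind2 (kron (Jblock l) (Jblock k))"
    and "kron (Vu (2*l)) (Vu (2*k)) * G2 = G2 * Ind2 (kron (Jblock l) (Jblock k))"
    and "\<And>a b. a \<in> carrier_vec (2*(l*k)) \<Longrightarrow> b \<in> carrier_vec (2*(l*k)) \<Longrightarrow>
        G1 *\<^sub>v a + G2 *\<^sub>v b = 0\<^sub>v (2*l*(2*k)) \<Longrightarrow> a = 0\<^sub>v (2*(l*k)) \<and> b = 0\<^sub>v (2*(l*k))"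
    and "\<And>a b. a \<in> carrier_vec (2*(l*k)) \<Longrightarrow> b \<in> carrier_vec (2*(l*k)) \<Longrightarrow>
        bil (kron (Vform (2*l)) (Vform (2*k))) (G1 *\<^sub>v a) (G2 *\<^sub>v b) = 0"
proof -
  have k0: "0 < k" using k by (rule odd_pos)
  let ?N = "2*l*(2*k)" and ?n = "2*(l*k)"
  let ?T = "kron (Vbasis l) (Vbasis k) :: 'a mat"
  let ?E = "same_half_embed l k :: 'a mat" and ?K = "kron (1\<^sub>m (2*l)) (Ind2 (Jblock k)) :: 'a mat"
  have J: "(Jblock l :: 'a mat) \<in> carrier_mat l l" "(Jblock k :: 'a mat) \<in> carrier_mat k k"
    by (rule Jblock_carrier)+
  obtain Ti where Ti: "Ti \<in> carrier_mat ?N ?N" "Ti * ?T = 1\<^sub>m ?N"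
    using kron_Vbasis_left_invertible by blast
  have carriers: "?T \<in> carrier_mat ?N ?N" "kron (Vu (2*l)) (Vu (2*k)) \<in> carrier_mat ?N ?N"
      "(kron (Ind2 (Jblock l)) (Ind2 (Jblock k)) :: 'a mat) \<in> carrier_mat ?N ?N"
      "kron (Vform (2*l)) (Vform (2*k)) \<in> carrier_mat ?N ?N" "?E \<in> carrier_mat ?N ?n" "?K * ?E \<in> carrier_mat ?N ?n"
      "(Ind2 (kron (Jblock l) (Jblock k)) :: 'a mat) \<in> carrier_mat ?n ?n"
    by (rule kron_carrier[OF Vbasis_carrier Vbasis_carrier] kron_carrier[OF Vu_carrier Vu_carrier]
        kron_carrier[OF Ind2_carrier[OF J(1)] Ind2_carrier[OF J(2)]] kron_carrier[OF Vform_carrier Vform_carrier]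
        same_half_embed_carrier Ind2_carrier[OF kron_carrier[OF J]]
        mult_carrier_mat[OF kron_carrier[OF one_carrier_mat Ind2_carrier[OF J(2)]] same_half_embed_carrier])+
  have indep: "a = 0\<^sub>v ?n \<and> b = 0\<^sub>v ?n"
    if "a \<in> carrier_vec ?n" "b \<in> carrier_vec ?n" "?E *\<^sub>v a + (?K * ?E) *\<^sub>v b = 0\<^sub>v ?N" for a b
    by (rule same_half_embed_independent[OF J(2) k0 _ that]) (auto intro: Jblock_injective)
  have orth: "bil (transpose_mat ?T * (kron (Vform (2*l)) (Vform (2*k)) * ?T)) (?E *\<^sub>v a) ((?K * ?E) *\<^sub>v b) = 0"
    if "a \<in> carrier_vec ?n" "b \<in> carrier_vec ?n" for a b
    unfolding kron_congruence[OF Vform_carrier Vbasis_carrier Vform_carrier Vbasis_carrier] Vgram_def[symmetric]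
    by (rule same_half_embed_orthogonal[OF J(2) k0 Vgram_carrier Vgram_carrier _ _ that])
      (auto intro: Vgram_diagonal_blocks[OF l two] Vgram_diagonal_blocks[OF k two])
  show "G1 \<in> carrier_mat ?N ?n" "G2 \<in> carrier_mat ?N ?n"
    unfolding G1_def G2_def using carriers by auto
  note transfer = intertwiner_pair_transfer[OF carriers(1) Ti(1,2) carriers(2,3) kron_Vu_Vbasis[OF two]
      carriers(4-7) kron_Ind2_same_half_embed[OF J k0] kron_Ind2_swapped_embed[OF J k0] indep orth]
  show "kron (Vu (2*l)) (Vu (2*k)) * G1 = G1 * Ind2 (kron (Jblock l) (Jblock k))"
    "kron (Vu (2*l)) (Vu (2*k)) * G2 = G2 * Ind2 (kron (Jblock l) (Jblock k))"
    "\<And>a b. a \<in> carrier_vec ?n \<Longrightarrow> b \<in> carrier_vec ?n \<Longrightarrow> G1 *\<^sub>v a + G2 *\<^sub>v b = 0\<^sub>v ?N \<Longrightarrow>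
        a = 0\<^sub>v ?n \<and> b = 0\<^sub>v ?n"
    "\<And>a b. a \<in> carrier_vec ?n \<Longrightarrow> b \<in> carrier_vec ?n \<Longrightarrow>
        bil (kron (Vform (2*l)) (Vform (2*k))) (G1 *\<^sub>v a) (G2 *\<^sub>v b) = 0"
    using transfer[folded G2_def G1_def] by blast+
qed

theorem lemma7p3:
  fixes q l k :: nat
  assumes "alg_closed TYPE('a::field)"
    and "(2::'a) = 0"
    and "\<exists>e. q = 2 ^ e"
    and "odd l" and "odd k" and "0 < l" and "l \<le> q div 2" and "0 < k" and "k \<le> q div 2"
  shows "\<exists>W W'.
     submodule_of (kron (Vu (2*l)) (Vu (2*k)) :: 'a mat) W \<and>
     submodule_of (kron (Vu (2*l)) (Vu (2*k)) :: 'a mat) W' \<and>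
     W \<inter> W' = {0\<^sub>v (2*l*(2*k))} \<and>
     (\<forall>v\<in>carrier_vec (2*l*(2*k)). \<exists>w\<in>W. \<exists>w'\<in>W'. v = w + w') \<and>
     (\<forall>w\<in>W. \<forall>w'\<in>W'. bil (kron (Vform (2*l)) (Vform (2*k))) w w' = 0) \<and>
     module_iso (kron (Vu (2*l)) (Vu (2*k))) W (Ind2 (kron (Jblock l) (Jblock k))) \<and>
     module_iso (kron (Vu (2*l)) (Vu (2*k))) W' (Ind2 (kron (Jblock l) (Jblock k)))"
proof -
  have N: "2*l*(2*k) = 2*(l*k) + 2*(l*k)" by simp
  note G = kron_V_orthogonal_intertwiners[OF assms(2,4,5)]
  show ?thesis unfolding N
    by (rule orthogonal_decomposition_of_intertwiners[OF kron_carrier[OF Vu_carrier Vu_carrier, of "2*l" "2*k", unfolded N]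
          G(1-2)[unfolded N] Ind2_carrier[OF kron_carrier[OF Jblock_carrier Jblock_carrier]] G(3-6)[unfolded N]])
qed

end
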